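(* Let $\mathsf{k}$ be a field of characteristic zero, $S=\mathsf{k}[x,y,z]$, $R=\mathsf{k}[X,Y,Z]$ with $S$ acting by differentiation. Let $F\in R$ be nonzero homogeneous of even degree $d\ge2$, $A=S/\operatorname{Ann}_S(F)$, and $\ell\in S_1$ with $\ell^2\ne0$ and $\ell^3=0$ in $A$. Set $(r,s,t)=(h_{A^{(2)}}(\frac d2-1),h_{A^{(1)}}(\frac d2-1),h_A(\frac d2))$. Then the Hilbert functions of $A$, $A^{(1)}$, $A^{(2)}$ are determined by $(r,s,t)$ as follows. (1) If $d\ge4$, $r\in[1,\frac d2-1]$, $s\in[2r,\frac d2+r]$ and $t\in[2s-r,\frac d2+s+1]$, then $h_{A^{(2)}}(i)=i+1$ for $0\le i\le r-1$ and $h_{A^{(2)}}(i)=r$ for $r\le i\le \frac d2-1$; $h_{A^{(1)}}(i)=2i+1$ for $0\le i\le r-1$, $h_{A^{(1)}}(i)=i+r+1$ for $r\le i\le s-r-1$, and $h_{A^{(1)}}(i)=s$ for $s-r\le i\le\frac d2-1$. If $t=3r$, then $h_A$ is one of the following two functions on $0\le i\le \frac d2$: (a) $h_A(0)=1$, $h_A(i)=3i$ for $1\le i\le r-1$, $h_A(i)=3r$ for $r\le i\le\frac d2$; or (b) $h_A(0)=1$, $h_A(i)=3i$ for $1\le i\le r-1$, $h_A(r)=3r-1$, $h_A(i)=3r$ for $r+1\le i\le \frac d2$. Otherwise (i.e. $t>3r$): $h_A(0)=1$; $h_A(i)=3i$ for $1\le i\le r$; $h_A(i)=2i+r+1$ for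 $r+1\le i\le s-r-1$; at $i=s-r$, $h_A(i)=2i+r+1$ if $t>2s-r$ and $s>2r$, and $h_A(i)=2i+r$ if $t>2s-r$ and $s=2r$; $h_A(i)=i+s+1$ for $s-r+1\le i\le t-s-1$; and $h_A(i)=t$ for $t-s\le i\le\frac d2$. (2) If $d\ge2$, $r=\frac d2$, $s=d-1$ and $t\in[\frac{3d}{2}-2,\frac{3d}{2}]$, then for every $0\le i\le\frac d2-1$, $h_{A^{(2)}}(i)=i+1$ and $h_{A^{(1)}}(i)=2i+1$, and $h_A(0)=1$, $h_A(i)=3i$ for $1\le i\le\frac d2-1$, $h_A(\frac d2)=t$.
   Context: $x,y,z$ act as $\partial/\partial X,\partial/\partial Y,\partial/\partial Z$; $\operatorname{Ann}_S(G)=\{g\in S:g\circ G=0\}$. $\ell^k=0$ in $A$ means $\ell^k\circ F=0$. $A^{(i)}:=S/\operatorname{Ann}_S(\ell^i\circ F)$ (an Artinian Gorenstein algebra of socle degree $d-i$ when $\ell^i\circ F\neq 0$); $h_B(j)=\dim_{\mathsf{k}}B_j$. Intervals $[a,b]$ denote sets of integers. *)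

theory Defs
  imports Main "HOL.Vector_Spaces" "HOL-Library.Function_Algebras"
begin

text \<open>Polynomials in three variables over a field 'k, represented by their
coefficient functions on exponent triples (a,b,c), i.e. the monomial
x^a y^b z^c (in S) resp. X^a Y^b Z^c (in R).\<close>

type_synonym 'k poly3 = "nat \<times> nat \<times> nat \<Rightarrow> 'k"

fun mdeg :: "nat \<times> nat \<times> nat \<Rightarrow> nat" where
  "mdeg (a, b, c) = a + b + c"

fun madd :: "nat \<times> nat \<times> nat \<Rightarrow> nat \<times> nat \<times> nat \<Rightarrow> nat \<times> nat \<times> nat" where
  "madd (a, b, c) (a', b', c') = (a + a', b + b', c + c')"

definition supp3 :: "'k::zero poly3 \<Rightarrow> (nat \<times> nat \<times> nat) set" where
  "supp3 p = {m. p m \<noteq> 0}"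

definition is_poly3 :: "'k::zero poly3 \<Rightarrow> bool" where
  "is_poly3 p \<longleftrightarrow> finite (supp3 p)"

definition homog :: "nat \<Rightarrow> 'k::zero poly3 \<Rightarrow> bool" where
  "homog j p \<longleftrightarrow> (\<forall>m. p m \<noteq> 0 \<longrightarrow> mdeg m = j)"

definition graded :: "nat \<Rightarrow> 'k::zero poly3 set" where
  "graded j = {p. homog j p}"

definition one3 :: "'k::{zero,one} poly3" where
  "one3 m = (if m = (0, 0, 0) then 1 else 0)"

definition pmul :: "'k::comm_semiring_1 poly3 \<Rightarrow> 'k poly3 \<Rightarrow> 'k poly3" where
  "pmul p q = (\<lambda>g. \<Sum>(\<alpha>, \<beta>) \<in> {(\<alpha>, \<beta>). \<alpha> \<in> supp3 p \<and> \<beta> \<in> supp3 q \<and> madd \<alpha> \<beta> = g}.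
                     p \<alpha> * q \<beta>)"

primrec ppow :: "'k::comm_semiring_1 poly3 \<Rightarrow> nat \<Rightarrow> 'k poly3" where
  "ppow p 0 = one3"
| "ppow p (Suc n) = pmul p (ppow p n)"

text \<open>coefficient of X^\<gamma> in (d/dX)^\<alpha> X^(\<alpha>+\<gamma>) : (\<alpha>+\<gamma>)!/\<gamma>!\<close>
fun dcoef :: "nat \<times> nat \<times> nat \<Rightarrow> nat \<times> nat \<times> nat \<Rightarrow> nat" where
  "dcoef (a, b, c) (u, v, w) =
     (fact (a + u) div fact u) * (fact (b + v) div fact v) * (fact (c + w) div fact w)"

text \<open>g \<circ> G : the action of g \<in> S on G \<in> R by differentiation\<close>
definition act :: "'k::comm_semiring_1 poly3 \<Rightarrow> 'k poly3 \<Rightarrow> 'k poly3" where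
  "act g G = (\<lambda>\<gamma>. \<Sum>\<alpha> \<in> supp3 g. g \<alpha> * G (madd \<alpha> \<gamma>) * of_nat (dcoef \<alpha> \<gamma>))"

definition Ann :: "'k::comm_semiring_1 poly3 \<Rightarrow> 'k poly3 set" where
  "Ann G = {g. is_poly3 g \<and> act g G = 0}"

definition scale3 :: "'k::field \<Rightarrow> 'k poly3 \<Rightarrow> 'k poly3" where
  "scale3 c p = (\<lambda>m. c * p m)"

definition dim3 :: "'k::field poly3 set \<Rightarrow> nat" where
  "dim3 V = vector_space.dim scale3 V"

text \<open>Hilbert function of S/Ann_S(G): h(j) = dim_k (S_j / (Ann_S(G))_j)
  = dim S_j - dim (Ann_S(G) \<inter> S_j).\<close>
definition hilb :: "('k::field) poly3 \<Rightarrow> nat \<Rightarrow> nat" where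
  "hilb G j = dim3 (graded j :: 'k poly3 set) - dim3 (graded j \<inter> Ann G)"

end

(*
  Write h_G(j) = dim (S_j o G). Choose a variable x_k whose coefficient in l is nonzero and let T_i
  be the forms of degree i not involving x_k. Solving l for x_k gives
  S_i o G = T_i o G + S_(i-1) o (l o G), hence h_G(i) = q_G(i) + h_(l o G)(i - 1) with
  q_G(i) = i + 1 - dim U_i, where U_i = {t in T_i. t o G in S_(i-1) o (l o G)}. The spaces U_i are
  stable under multiplication by the two other variables, so q_G obeys Macaulay's bound for
  quotients of a polynomial ring in two variables (once q_G(i) <= i it is non-increasing), and
  U_i grows when passing from G to l o G, so q_(l o G) <= q_G. Applied to F, l o F and l^2 o F
  (where l^3 o F = 0), and combined with the symmetry h_G(j) = h_G(deg G - j) coming from the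
  nondegenerate pairing (f o G, g o G) |-> (fg o G)(0), these constraints leave exactly the listed
  Hilbert functions.
*)
theory Submission
  imports Defs
begin

section \<open>Finite-dimensional subspaces\<close>

text \<open>The coefficient space of polynomials is infinite-dimensional, so the library's theory of
  finite-dimensional vector spaces does not apply; dimension theory is developed here for
  finite-dimensional subspaces of an arbitrary vector space.\<close>

context vector_space
begin

definition finite_dim :: "'b set \<Rightarrow> bool" where
  "finite_dim V \<longleftrightarrow> (\<exists>A. finite A \<and> V \<subseteq> span A)"

lemma finite_dim_subset: "finite_dim W \<Longrightarrow> V \<subseteq> W \<Longrightarrow> finite_dim V"
  unfolding finite_dim_def by blast

lemma finite_dim_span: "finite A \<Longrightarrow> finite_dim (span A)"
  unfolding finite_dim_def by blast

lemma finite_dim_independent_bound: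
  assumes "finite_dim V" "B \<subseteq> V" "independent B"
  shows "finite B \<and> card B \<le> dim V"
proof -
  obtain A where A: "finite A" "V \<subseteq> span A"
    using assms(1) finite_dim_def by blast
  obtain B' where B': "B \<subseteq> B'" "B' \<subseteq> V" "independent B'" "V \<subseteq> span B'"
    using maximal_independent_subset_extend[OF assms(2,3)] by blast
  have "finite B'"
    using independent_span_bound[OF A(1) B'(3)] B'(2) A(2) by blast
  moreover have "card B' = dim V"
    using basis_card_eq_dim[OF B'(2,4,3)] .
  ultimately show ?thesis
    using B'(1) finite_subset card_mono by metis
qed

lemma finite_dim_basis:
  assumes "finite_dim V"
  obtains B where "B \<subseteq> V" "independent B" "V \<subseteq> span B" "finite B" "card B = dim V"
  using basis_exists finite_dim_independent_bound[OF assms] by metis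

lemma dim_le_finite_dim:
  assumes "finite_dim W" "V \<subseteq> W"
  shows "dim V \<le> dim W"
proof -
  obtain B where "B \<subseteq> V" "independent B" "V \<subseteq> span B" "card B = dim V"
    by (rule basis_exists)
  moreover from this have "card B \<le> dim W"
    using finite_dim_independent_bound[OF assms(1), of B] assms(2) by blast
  ultimately show ?thesis
    by simp
qed

lemma dim_less_finite_dim:
  assumes "finite_dim W" "subspace V" "V \<subseteq> W" "w \<in> W" "w \<notin> V"
  shows "dim V < dim W"
proof -
  obtain B where B: "B \<subseteq> V" "independent B" "V \<subseteq> span B" "finite B" "card B = dim V"
    using finite_dim_basis[OF finite_dim_subset[OF assms(1,3)]] by blast
  have "w \<notin> span B"
    using span_minimal[OF B(1) assms(2)] assms(5) by blast
  then have "independent (insert w B)" "insert w B \<subseteq> W"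
    using B(1,2) assms(3,4) independent_insertI by auto
  then have "card (insert w B) \<le> dim W"
    using finite_dim_independent_bound[OF assms(1)] by blast
  moreover have "w \<notin> B"
    using \<open>w \<notin> span B\<close> span_base by blast
  ultimately show ?thesis
    using B(4,5) by simp
qed

lemma finite_dim_basis_extend:
  assumes "subspace V" "finite_dim V" "subspace K" "K \<subseteq> V"
  obtains C B where "C \<subseteq> B" "independent B" "span C = K" "span B = V" "finite B"
proof -
  obtain C where C: "C \<subseteq> K" "independent C" "K \<subseteq> span C"
    using maximal_independent_subset by blast
  obtain B where B: "C \<subseteq> B" "B \<subseteq> V" "independent B" "V \<subseteq> span B"
    using maximal_independent_subset_extend[of C V] C(1,2) assms(4) by blast
  have "span C = K" "span B = V"
    using C B assms(1,3) span_subspace by auto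
  moreover have "finite B"
    using finite_dim_independent_bound[OF assms(2) B(2,3)] by blast
  ultimately show thesis
    using that B(1,3) by blast
qed

lemma span_Int_disjoint:
  assumes "independent B" "C \<subseteq> B" "D \<subseteq> B" "C \<inter> D = {}"
  shows "span C \<inter> span D = {0}"
proof -
  have "v = 0" if "v \<in> span C" "v \<in> span D" for v
  proof -
    have "representation B v = representation C v" "representation B v = representation D v"
      using representation_extend[OF assms(1)] that assms(2,3) by blast+
    then have "representation B v = (\<lambda>b. 0)"
      using representation_ne_zero[of C v] representation_ne_zero[of D v] assms(4)
      by (metis disjoint_iff)
    moreover have "v \<in> span B"
      using that(1) assms(2) span_mono by blast
    ultimately show ?thesis
      using sum_nonzero_representation_eq[OF assms(1), of v] by simp
  qed
  then show ?thesis
    using span_zero by blast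
qed

lemma sums_subset_left: "subspace Y \<Longrightarrow> X \<subseteq> {x + y |x y. x \<in> X \<and> y \<in> Y}"
  using subspace_0 by force

lemma sums_subset_right: "subspace X \<Longrightarrow> Y \<subseteq> {x + y |x y. x \<in> X \<and> y \<in> Y}"
  using subspace_0 by force

lemma image_span_Un_kernel:
  assumes "module_hom scale scale f" "\<And>c. c \<in> span C \<Longrightarrow> f c = 0"
  shows "f ` span (C \<union> D) = f ` span D"
proof
  interpret f: module_hom scale scale f by fact
  show "f ` span (C \<union> D) \<subseteq> f ` span D"
  proof
    fix w assume "w \<in> f ` span (C \<union> D)"
    then obtain c d where "w = f (c + d)" "c \<in> span C" "d \<in> span D"
      using span_Un by auto
    then show "w \<in> f ` span D"
      using f.add assms(2) by auto
  qed
  show "f ` span D \<subseteq> f ` span (C \<union> D)"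
    using span_mono[of D "C \<union> D"] by blast
qed

lemma rank_nullity_finite_dim:
  assumes "module_hom scale scale f" "subspace V" "finite_dim V"
  shows "dim V = dim {v \<in> V. f v = 0} + dim (f ` V)"
proof -
  interpret f: module_hom scale scale f by fact
  define K where "K = {v \<in> V. f v = 0}"
  have "subspace K"
    unfolding K_def using subspace_inter[OF assms(2) f.subspace_kernel] by (simp add: Int_def)
  then obtain C B where CB: "C \<subseteq> B" "independent B" "span C = K" "span B = V" "finite B"
    using finite_dim_basis_extend[OF assms(2,3)] K_def by blast
  define D where "D = B - C"
  have B_split: "B = C \<union> D" "C \<inter> D = {}" "D \<subseteq> B"
    using CB(1) unfolding D_def by blast+
  have "x = 0" if "x \<in> span D" "f x = 0" for x
  proof -
    have "x \<in> span C"
      using that span_mono[OF B_split(3)] CB(3,4) unfolding K_def by blast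
    then show ?thesis
      using span_Int_disjoint[OF CB(2,1) B_split(3,2)] that(1) by blast
  qed
  then have inj: "inj_on f (span D)"
    using f.inj_on_iff_eq_0[OF subspace_span] by blast
  have "f ` V = f ` span D"
    using image_span_Un_kernel[OF assms(1), of C D] CB(3,4) B_split(1) unfolding K_def by blast
  then have "dim (f ` V) = card D"
    using dim_span_eq_card_independent[OF f.independent_injective_image[OF _ inj]]
      independent_mono[OF CB(2) B_split(3)] card_image[OF inj_on_subset[OF inj span_superset]]
    by (simp add: f.span_image)
  moreover have "dim V = card C + card D"
    using dim_span_eq_card_independent[OF CB(2)] CB(4,5) B_split card_Un_disjoint
    by (metis finite_Un)
  moreover have "dim K = card C"
    using dim_span_eq_card_independent independent_mono[OF CB(2,1)] CB(3) by metis
  ultimately show ?thesis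
    unfolding K_def by simp
qed

lemma dim_image_eq_if_kernel_trivial:
  assumes "module_hom scale scale f" "subspace V" "finite_dim V"
    and "\<And>v. v \<in> V \<Longrightarrow> f v = 0 \<Longrightarrow> v = 0"
  shows "dim (f ` V) = dim V"
proof -
  have "{v \<in> V. f v = 0} \<subseteq> span {}"
    using assms(4) by auto
  then have "dim {v \<in> V. f v = 0} = 0"
    using dim_le_card[of _ "{}"] by fastforce
  then show ?thesis
    using rank_nullity_finite_dim[OF assms(1-3)] by simp
qed

lemma span_Un_eq_if_Int:
  assumes "subspace T" "span C = T \<inter> span E" "D \<subseteq> T" "T \<subseteq> span (E \<union> D)"
  shows "span (C \<union> D) = T"
proof (rule span_subspace)
  show "C \<union> D \<subseteq> T"
    using assms(2,3) span_superset by blast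
  show "T \<subseteq> span (C \<union> D)"
  proof
    fix t assume t: "t \<in> T"
    then obtain y e where ye: "t = y + e" "y \<in> span E" "e \<in> span D"
      using assms(4) span_Un by blast
    have "e \<in> T"
      using ye(3) span_minimal[OF assms(3,1)] by blast
    then have "y \<in> span C"
      using assms(2) ye(1,2) subspace_diff[OF assms(1) t] by force
    then show "t \<in> span (C \<union> D)"
      using ye(1,3) span_Un by blast
  qed
qed fact

lemma dim_sums_Int_finite_dim:
  assumes T: "subspace T" and Y: "subspace Y"
    and fin: "finite_dim {x + y |x y. x \<in> T \<and> y \<in> Y}"
  shows "dim {x + y |x y. x \<in> T \<and> y \<in> Y} + dim (T \<inter> Y) = dim T + dim Y"
proof -
  define S where "S = {x + y |x y. x \<in> T \<and> y \<in> Y}"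
  obtain C BY where C: "C \<subseteq> BY" "independent BY" "span C = T \<inter> Y" "span BY = Y" "finite BY"
    using finite_dim_basis_extend[OF Y finite_dim_subset[OF fin sums_subset_right[OF T]]
        subspace_inter[OF T Y]] by blast
  obtain B where B: "BY \<subseteq> B" "B \<subseteq> BY \<union> T" "independent B" "BY \<union> T \<subseteq> span B"
    using maximal_independent_subset_extend[of BY "BY \<union> T"] C(2) by blast
  have span_B: "span B = S"
  proof -
    have "span B = span (T \<union> BY)"
      unfolding span_eq using B(2,4) span_superset by blast
    moreover have "span T = T"
      using T by simp
    ultimately show ?thesis
      unfolding S_def span_Un C(4) by simp
  qed
  define D where "D = B - BY"
  have B_split: "B = BY \<union> D" "BY \<inter> D = {}"
    using B(1) unfolding D_def by blast+
  have "finite B"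
    using finite_dim_independent_bound[OF fin _ B(3)] span_B span_superset unfolding S_def by blast
  then have finite: "finite B" "finite D"
    unfolding D_def by simp_all
  have "span (C \<union> D) = T"
  proof (rule span_Un_eq_if_Int[OF T])
    show "span C = T \<inter> span BY" "D \<subseteq> T" "T \<subseteq> span (BY \<union> D)"
      using C(3,4) B(2,4) B_split(1) unfolding D_def by auto
  qed
  moreover have "independent (C \<union> D)" "C \<inter> D = {}" "finite C"
    using independent_mono[OF B(3)] B(1) C(1,5) finite_subset unfolding D_def by auto
  ultimately have "dim T = card C + card D"
    using dim_span_eq_card_independent card_Un_disjoint finite(2) by metis
  moreover have "card B = card BY + card D"
    using card_Un_disjoint[OF C(5) finite(2) B_split(2)] B_split(1) by simp
  moreover have "dim S = card B" "dim Y = card BY" "dim (T \<inter> Y) = card C"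
    using dim_span_eq_card_independent B(3) C(2,3,4) span_B independent_mono[OF C(2,1)]
    by metis+
  ultimately show ?thesis
    unfolding S_def by simp
qed

end

section \<open>Polynomials in three variables and the action by differentiation\<close>

interpretation VS: vector_space "scale3 :: 'k::field \<Rightarrow> 'k poly3 \<Rightarrow> 'k poly3"
  by unfold_locales (auto simp: scale3_def fun_eq_iff algebra_simps)

lemma scale3_apply [simp]: "scale3 c p m = c * p m"
  by (simp add: scale3_def)

lemma sum_fun_apply: "(sum f A) x = (\<Sum>a\<in>A. f a x)"
  by (induction A rule: infinite_finite_induct) auto

definition monom3 :: "nat \<times> nat \<times> nat \<Rightarrow> 'k::{zero,one} poly3" where
  "monom3 a = (\<lambda>b. if b = a then 1 else 0)"

definition monoms :: "nat \<Rightarrow> (nat \<times> nat \<times> nat) set" where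
  "monoms j = {a. mdeg a = j}"

lemma mdeg_madd [simp]: "mdeg (madd a b) = mdeg a + mdeg b"
  by (cases a; cases b) auto

lemma madd_commute: "madd a b = madd b a"
  by (cases a; cases b) auto

lemma madd_left_commute: "madd b (madd a c) = madd (madd a b) c"
  by (cases a; cases b; cases c) auto

lemma madd_zero [simp]: "madd (0,0,0) a = a" "madd a (0,0,0) = a"
  by (cases a; simp)+

lemma madd_left_cancel [simp]: "madd a b = madd a c \<longleftrightarrow> b = c"
  by (cases a; cases b; cases c) auto

lemma finite_monoms: "finite (monoms j)"
proof -
  have "monoms j \<subseteq> {..j} \<times> {..j} \<times> {..j}"
    unfolding monoms_def by auto
  then show ?thesis
    using finite_subset by blast
qed

lemma homogD: "homog j p \<Longrightarrow> p m \<noteq> 0 \<Longrightarrow> mdeg m = j"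
  unfolding homog_def by blast

lemma supp3_subset_monoms: "homog j p \<Longrightarrow> supp3 p \<subseteq> monoms j"
  by (auto simp: homog_def supp3_def monoms_def)

lemma finite_supp3_homog: "homog j p \<Longrightarrow> finite (supp3 p)"
  using supp3_subset_monoms finite_monoms finite_subset by blast

lemma finite_supp3_graded: "g \<in> graded j \<Longrightarrow> finite (supp3 g)"
  unfolding graded_def using finite_supp3_homog by blast

lemma supp3_monom3: "supp3 (monom3 a :: 'k::zero_neq_one poly3) = {a}"
  by (auto simp: supp3_def monom3_def)

lemma finite_supp3_monom3: "finite (supp3 (monom3 a :: 'k::zero_neq_one poly3))"
  by (simp add: supp3_monom3)

lemma supp3_one3: "supp3 (one3 :: 'k::zero_neq_one poly3) = {(0,0,0)}"
  by (auto simp: supp3_def one3_def)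

lemma supp3_add: "supp3 (p + q) \<subseteq> supp3 p \<union> supp3 (q :: 'k::monoid_add poly3)"
  by (auto simp: supp3_def)

lemma supp3_scale3: "supp3 (scale3 c p) \<subseteq> supp3 (p :: 'k::field poly3)"
  by (auto simp: supp3_def)

lemma finite_supp3_sum:
  "finite I \<Longrightarrow> (\<And>i. i \<in> I \<Longrightarrow> finite (supp3 (f i))) \<Longrightarrow>
    finite (supp3 (\<Sum>i\<in>I. f i :: 'k::comm_monoid_add poly3))"
proof (induction I rule: finite_induct)
  case empty
  then show ?case
    by (simp add: supp3_def)
next
  case (insert x F)
  then have "finite (supp3 (f x) \<union> supp3 (\<Sum>i\<in>F. f i))"
    by simp
  then show ?case
    unfolding sum.insert[OF insert.hyps] using supp3_add finite_subset by blast
qed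

lemma poly3_expansion:
  assumes "finite A" "supp3 p \<subseteq> A"
  shows "p = (\<Sum>a\<in>A. scale3 (p a) (monom3 a))"
proof
  fix b
  have "(\<Sum>a\<in>A. scale3 (p a) (monom3 a)) b = (\<Sum>a\<in>A. if b = a then p a else 0)"
    by (simp add: sum_fun_apply monom3_def if_distrib cong: if_cong)
  also have "\<dots> = p b"
    using assms by (cases "b \<in> A") (auto simp: supp3_def)
  finally show "p b = (\<Sum>a\<in>A. scale3 (p a) (monom3 a)) b"
    by simp
qed

lemma inj_monom3: "inj (monom3 :: _ \<Rightarrow> 'k::zero_neq_one poly3)"
  by (rule injI) (metis monom3_def zero_neq_one)

lemma independent_monom3: "VS.independent (monom3 ` A :: 'k::field poly3 set)"
proof
  assume "VS.dependent (monom3 ` A :: 'k poly3 set)"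
  then obtain T u where T: "finite T" "T \<subseteq> monom3 ` A"
    "(\<Sum>v\<in>T. scale3 (u v) v) = (0 :: 'k poly3)" and "\<exists>v\<in>T. u v \<noteq> 0"
    unfolding VS.dependent_explicit by blast
  then obtain a where a: "monom3 a \<in> T" "u (monom3 a) \<noteq> 0"
    by blast
  have "scale3 (u v) v a = (if v = monom3 a then u v else 0)" if v: "v \<in> T" for v
  proof -
    obtain b where b: "v = monom3 b"
      using v T(2) by blast
    show ?thesis
    proof (cases "b = a")
      case False
      then have "v \<noteq> monom3 a"
        using b inj_monom3 by (auto dest: injD)
      then show ?thesis
        using b False by (simp add: monom3_def)
    qed (simp add: b monom3_def)
  qed
  then have "(\<Sum>v\<in>T. scale3 (u v) v) a = (\<Sum>v\<in>T. if v = monom3 a then u v else 0)"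
    unfolding sum_fun_apply by (rule sum.cong[OF refl])
  also have "\<dots> = u (monom3 a)"
    using T(1) a(1) by simp
  finally show False
    using T(3) a(2) by simp
qed

lemma homog_zero: "homog j 0"
  unfolding homog_def by simp

lemma homog_monom3: "homog (mdeg a) (monom3 a :: 'k::zero_neq_one poly3)"
  unfolding homog_def monom3_def by auto

lemma homog_one3: "homog 0 (one3 :: 'k::zero_neq_one poly3)"
  by (auto simp: homog_def one3_def split: if_splits)

lemma homog_pmul:
  assumes "homog a f" "homog b g"
  shows "homog (a + b) (pmul f (g :: 'k::comm_semiring_1 poly3))"
  unfolding homog_def
proof (intro allI impI)
  fix d assume "pmul f g d \<noteq> 0"
  then have "{(x, y). x \<in> supp3 f \<and> y \<in> supp3 g \<and> madd x y = d} \<noteq> {}"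
    unfolding pmul_def by (metis (no_types, lifting) sum.empty)
  then obtain x y where "x \<in> supp3 f" "y \<in> supp3 g" "madd x y = d"
    by blast
  moreover from this have "mdeg x = a" "mdeg y = b"
    using assms homogD unfolding supp3_def by blast+
  ultimately show "mdeg d = a + b"
    by auto
qed

lemma homog_ppow: "homog 1 l \<Longrightarrow> homog n (ppow l n :: 'k::comm_semiring_1 poly3)"
  by (induction n) (auto simp: homog_one3 dest: homog_pmul)

lemma subspace_supp3_subset: "VS.subspace {p :: 'k::field poly3. supp3 p \<subseteq> A}"
proof (rule VS.subspaceI)
  show "0 \<in> {p :: 'k poly3. supp3 p \<subseteq> A}"
    by (simp add: supp3_def)
qed (use supp3_add supp3_scale3 in blast)+

lemma span_monom3:
  assumes "finite A"
  shows "VS.span (monom3 ` A :: 'k::field poly3 set) = {p. supp3 p \<subseteq> A}"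
proof
  show "VS.span (monom3 ` A :: 'k poly3 set) \<subseteq> {p. supp3 p \<subseteq> A}"
    by (rule VS.span_minimal[OF _ subspace_supp3_subset]) (auto simp: supp3_monom3)
  show "{p. supp3 p \<subseteq> A} \<subseteq> VS.span (monom3 ` A :: 'k poly3 set)"
  proof
    fix p :: "'k poly3" assume "p \<in> {p. supp3 p \<subseteq> A}"
    then have "p = (\<Sum>a\<in>A. scale3 (p a) (monom3 a))"
      using poly3_expansion[OF assms] by blast
    also have "\<dots> \<in> VS.span (monom3 ` A)"
      by (intro VS.span_sum VS.span_scale VS.span_base) auto
    finally show "p \<in> VS.span (monom3 ` A)" .
  qed
qed

lemma graded_eq_supp3: "graded j = {p. supp3 p \<subseteq> monoms j}"
  by (auto simp: graded_def homog_def supp3_def monoms_def)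

lemma graded_eq_span: "graded j = VS.span (monom3 ` monoms j :: 'k::field poly3 set)"
  by (simp add: span_monom3[OF finite_monoms] graded_eq_supp3)

lemma graded_subspace: "VS.subspace (graded j :: 'k::field poly3 set)"
  unfolding graded_eq_supp3 by (rule subspace_supp3_subset)

lemma finite_dim_graded: "VS.finite_dim (graded j :: 'k::field poly3 set)"
  unfolding graded_eq_span using VS.finite_dim_span finite_monoms by blast

lemma of_nat_dcoef:
  "(of_nat (dcoef (a1, a2, a3) (u1, u2, u3)) :: 'k::field_char_0) =
     fact (a1 + u1) / fact u1 * (fact (a2 + u2) / fact u2) * (fact (a3 + u3) / fact u3)"
proof -
  have "(of_nat (fact (a + u) div fact u) :: 'k) = fact (a + u) / fact u" for a u
  proof -
    obtain k where "fact (a + u) = fact u * (k :: nat)"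
      using fact_dvd[of u "a + u"] by (auto elim: dvdE)
    then show ?thesis
      by (metis (mono_tags, lifting) fact_nonzero nonzero_mult_div_cancel_left
          of_nat_fact of_nat_mult times_divide_eq_left)
  qed
  then show ?thesis
    by simp
qed

lemma dcoef_zero_left [simp]: "dcoef (0,0,0) g = 1"
  by (cases g) simp

lemma of_nat_dcoef_madd:
  "(of_nat (dcoef b (madd a g)) :: 'k::field_char_0) * of_nat (dcoef a g) = of_nat (dcoef (madd a b) g)"
proof -
  obtain a1 a2 a3 b1 b2 b3 g1 g2 g3 where "a = (a1, a2, a3)" "b = (b1, b2, b3)" "g = (g1, g2, g3)"
    by (cases a; cases b; cases g)
  moreover have "b1 + (a1 + g1) = a1 + b1 + g1" "b2 + (a2 + g2) = a2 + b2 + g2"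
    "b3 + (a3 + g3) = a3 + b3 + g3"
    by simp_all
  ultimately show ?thesis
    by (simp only: madd.simps of_nat_dcoef) (simp add: field_simps)
qed

lemma of_nat_dcoef_nonzero: "(of_nat (dcoef a g) :: 'k::field_char_0) \<noteq> 0"
  by (cases a; cases g) (simp only: of_nat_dcoef; simp)

lemma act_eq_sum:
  assumes "finite A" "supp3 g \<subseteq> A"
  shows "act g G c = (\<Sum>a\<in>A. g a * G (madd a c) * of_nat (dcoef a c))"
  unfolding act_def
  by (rule sum.mono_neutral_left) (use assms in \<open>auto simp: supp3_def\<close>)

lemma act_add_right: "act g (G1 + G2) = act g G1 + act (g :: 'k::comm_semiring_1 poly3) G2"
  by (rule ext) (simp add: act_def sum.distrib[symmetric] algebra_simps)

lemma act_scale3_right: "act g (scale3 c G) = scale3 c (act (g :: 'k::field poly3) G)"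
  by (rule ext) (simp add: act_def sum_distrib_left algebra_simps)

lemma act_zero_right [simp]: "act g 0 = (0 :: 'k::comm_semiring_1 poly3)"
  by (rule ext) (simp add: act_def)

lemma act_zero_left [simp]: "act 0 G = (0 :: 'k::comm_semiring_1 poly3)"
  by (rule ext) (simp add: act_def supp3_def)

lemma act_add_left:
  assumes "finite (supp3 g1)" "finite (supp3 g2)"
  shows "act (g1 + g2) G = act g1 G + act (g2 :: 'k::comm_semiring_1 poly3) G"
proof
  fix c
  have fin: "finite (supp3 g1 \<union> supp3 g2)"
    using assms by simp
  show "act (g1 + g2) G c = (act g1 G + act g2 G) c"
    using act_eq_sum[OF fin supp3_add] act_eq_sum[OF fin, of g1] act_eq_sum[OF fin, of g2]
    by (simp add: sum.distrib[symmetric] algebra_simps)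
qed

lemma act_scale3_left:
  assumes "finite (supp3 g)"
  shows "act (scale3 a g) G = scale3 a (act (g :: 'k::field poly3) G)"
proof
  fix c
  show "act (scale3 a g) G c = scale3 a (act g G) c"
    using act_eq_sum[OF assms supp3_scale3] act_eq_sum[OF assms, of g]
    by (simp add: sum_distrib_left algebra_simps)
qed

lemma act_sum_left:
  "finite I \<Longrightarrow> (\<And>i. i \<in> I \<Longrightarrow> finite (supp3 (f i))) \<Longrightarrow>
    act (\<Sum>i\<in>I. f i) G = (\<Sum>i\<in>I. act (f i) (G :: 'k::comm_semiring_1 poly3))"
  by (induction I rule: finite_induct) (simp_all add: act_add_left finite_supp3_sum)

lemma act_sum_right:
  "finite I \<Longrightarrow> act g (\<Sum>i\<in>I. f i) = (\<Sum>i\<in>I. act (g :: 'k::comm_semiring_1 poly3) (f i))"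
proof (induction I rule: finite_induct)
  case (insert x F)
  then show ?case
    unfolding sum.insert[OF insert.hyps] act_add_right by simp
qed (simp only: sum.empty act_zero_right)

lemma act_act_eq_sum:
  assumes "finite (supp3 f)" "finite (supp3 g)"
  shows "act f (act g G) c = (\<Sum>a\<in>supp3 f. \<Sum>b\<in>supp3 g.
     f a * g b * G (madd (madd a b) c) * (of_nat (dcoef (madd a b) c) :: 'k::field_char_0))"
proof -
  have "act f (act g G) c =
      (\<Sum>a\<in>supp3 f. f a * (\<Sum>b\<in>supp3 g. g b * G (madd b (madd a c)) * of_nat (dcoef b (madd a c)))
         * of_nat (dcoef a c))"
    using act_eq_sum[OF assms(1) order_refl] act_eq_sum[OF assms(2) order_refl] by simp
  also have "\<dots> = (\<Sum>a\<in>supp3 f. \<Sum>b\<in>supp3 g. f a * g b * G (madd b (madd a c))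
      * (of_nat (dcoef b (madd a c)) * of_nat (dcoef a c)))"
    by (simp add: sum_distrib_left sum_distrib_right algebra_simps)
  finally show ?thesis
    by (simp add: of_nat_dcoef_madd madd_left_commute)
qed

lemma act_commute:
  assumes "finite (supp3 f)" "finite (supp3 g)"
  shows "act f (act g G) = act g (act f (G :: 'k::field_char_0 poly3))"
proof
  fix c
  show "act f (act g G) c = act g (act f G) c"
    unfolding act_act_eq_sum[OF assms] act_act_eq_sum[OF assms(2,1)]
    by (subst sum.swap) (simp add: madd_commute mult_ac)
qed

lemma act_pmul:
  assumes f: "finite (supp3 f)" and g: "finite (supp3 g)"
  shows "act (pmul f g) G = act f (act g (G :: 'k::field_char_0 poly3))"
proof
  fix c
  let ?h = "\<lambda>p. madd (fst p) (snd p)"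
  let ?P = "supp3 f \<times> supp3 g"
  have fin: "finite ?P" "finite (?h ` ?P)"
    using f g by simp_all
  have pmul_eq: "pmul f g d = (\<Sum>p\<in>{p \<in> ?P. ?h p = d}. f (fst p) * g (snd p))" for d
    unfolding pmul_def by (rule sum.cong) auto
  have "supp3 (pmul f g) \<subseteq> ?h ` ?P"
  proof
    fix d assume "d \<in> supp3 (pmul f g)"
    then have "(\<Sum>p\<in>{p \<in> ?P. ?h p = d}. f (fst p) * g (snd p)) \<noteq> 0"
      unfolding supp3_def pmul_eq by simp
    then obtain p where "p \<in> {p \<in> ?P. ?h p = d}"
      by (rule sum.not_neutral_contains_not_neutral)
    then show "d \<in> ?h ` ?P"
      by blast
  qed
  then have "act (pmul f g) G c = (\<Sum>d\<in>?h ` ?P. pmul f g d * G (madd d c) * of_nat (dcoef d c))"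
    using act_eq_sum[OF fin(2)] by blast
  also have "\<dots> = (\<Sum>d\<in>?h ` ?P. \<Sum>p\<in>{p \<in> ?P. ?h p = d}.
      f (fst p) * g (snd p) * G (madd (?h p) c) * of_nat (dcoef (?h p) c))"
    unfolding pmul_eq sum_distrib_right by (intro sum.cong) auto
  also have "\<dots> = (\<Sum>p\<in>?P. f (fst p) * g (snd p) * G (madd (?h p) c) * of_nat (dcoef (?h p) c))"
    by (rule sum.group[OF fin]) auto
  also have "\<dots> = act f (act g G) c"
    unfolding act_act_eq_sum[OF f g] sum.cartesian_product by (rule sum.cong) auto
  finally show "act (pmul f g) G c = act f (act g G) c" .
qed

lemma act_one3 [simp]: "act one3 G = (G :: 'k::field_char_0 poly3)"
proof
  fix c
  show "act one3 G c = G c"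
    using act_eq_sum[of "{(0,0,0)}" one3 G c] by (simp add: supp3_one3 one3_def)
qed

lemma act_ppow_funpow:
  assumes "homog 1 l"
  shows "act (ppow l n) G = (act l ^^ n) (G :: 'k::field_char_0 poly3)"
proof (induction n)
  case (Suc n)
  then show ?case
    using act_pmul[OF finite_supp3_homog[OF assms] finite_supp3_homog[OF homog_ppow[OF assms]]]
    by simp
qed simp

lemma act_nonzeroE:
  assumes "act g G c \<noteq> (0 :: 'k::comm_semiring_1)"
  obtains a where "g a \<noteq> 0" "G (madd a c) \<noteq> 0"
proof -
  obtain a where "a \<in> supp3 g" "g a * G (madd a c) * of_nat (dcoef a c) \<noteq> 0"
    using assms unfolding act_def by (rule sum.not_neutral_contains_not_neutral)
  then show thesis
    using that by (metis mult_zero_left mult_zero_right)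
qed

lemma homog_act:
  assumes "homog a g" "homog D G"
  shows "homog (D - a) (act g (G :: 'k::comm_semiring_1 poly3))"
  unfolding homog_def
proof (intro allI impI)
  fix c assume "act g G c \<noteq> 0"
  then obtain b where "g b \<noteq> 0" "G (madd b c) \<noteq> 0"
    by (rule act_nonzeroE)
  then have "mdeg b = a" "mdeg (madd b c) = D"
    using assms homogD by blast+
  then show "mdeg c = D - a"
    by simp
qed

lemma pmul_monom3_madd: "pmul (monom3 b) p (madd b a) = (p a :: 'k::comm_semiring_1)"
proof -
  have "{(x, y). x \<in> supp3 (monom3 b :: 'k poly3) \<and> y \<in> supp3 p \<and> madd x y = madd b a}
        = (if p a = 0 then {} else {(b, a)})"
  proof (rule set_eqI)
    fix q :: "(nat \<times> nat \<times> nat) \<times> (nat \<times> nat \<times> nat)"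
    obtain x y where q: "q = (x, y)"
      by (cases q)
    show "q \<in> {(x, y). x \<in> supp3 (monom3 b :: 'k poly3) \<and> y \<in> supp3 p \<and> madd x y = madd b a}
       \<longleftrightarrow> q \<in> (if p a = 0 then {} else {(b, a)})"
      unfolding q using supp3_monom3[of b, where 'k='k] by (auto simp: supp3_def)
  qed
  then show ?thesis
    unfolding pmul_def by (simp add: monom3_def)
qed

lemma pmul_monom3_eq_0:
  assumes "\<And>a. c \<noteq> madd b a"
  shows "pmul (monom3 b) p c = (0 :: 'k::comm_semiring_1)"
proof -
  have "{(x, y). x \<in> supp3 (monom3 b :: 'k poly3) \<and> y \<in> supp3 p \<and> madd x y = c} = {}"
    using assms unfolding supp3_monom3 by blast
  then show ?thesis
    unfolding pmul_def by (simp only: sum.empty)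
qed

lemma pmul_monom3_nonzeroE:
  assumes "pmul (monom3 b) p c \<noteq> (0 :: 'k::comm_semiring_1)"
  obtains a where "c = madd b a" "p a \<noteq> 0"
proof -
  obtain a where a: "c = madd b a"
    using assms pmul_monom3_eq_0 by blast
  moreover have "p a \<noteq> 0"
    using assms unfolding a pmul_monom3_madd .
  ultimately show thesis
    by (rule that)
qed

lemma pmul_monom3_monom3: "pmul (monom3 a) (monom3 b) = (monom3 (madd a b) :: 'k::comm_semiring_1 poly3)"
proof
  fix c
  show "pmul (monom3 a) (monom3 b) c = (monom3 (madd a b) :: 'k poly3) c"
  proof (cases "\<exists>x. c = madd a x")
    case True
    then obtain x where c: "c = madd a x"
      by blast
    show ?thesis
      unfolding c pmul_monom3_madd by (simp add: monom3_def)
  next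
    case False
    then have "pmul (monom3 a) (monom3 b) c = (0 :: 'k)"
      by (intro pmul_monom3_eq_0) blast
    moreover have "c \<noteq> madd a b"
      using False by blast
    ultimately show ?thesis
      by (simp add: monom3_def)
  qed
qed

lemma act_monom3_monom3:
  "act (monom3 a) (act (monom3 b) G) = act (monom3 (madd a b)) (G :: 'k::field_char_0 poly3)"
  using act_pmul[OF finite_supp3_monom3 finite_supp3_monom3, of a b G]
  by (simp add: pmul_monom3_monom3)

fun deg_in :: "nat \<Rightarrow> nat \<times> nat \<times> nat \<Rightarrow> nat" where
  "deg_in k (a, b, c) = (if k = 0 then a else if k = 1 then b else c)"

definition unit3 :: "nat \<Rightarrow> nat \<times> nat \<times> nat" where
  "unit3 k = (if k = 0 then (1,0,0) else if k = 1 then (0,1,0) else (0,0,1))"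

lemma deg_in_madd [simp]: "deg_in j (madd a b) = deg_in j a + deg_in j b"
  by (cases a; cases b) auto

lemma deg_in_unit3: "j < 3 \<Longrightarrow> k < 3 \<Longrightarrow> deg_in j (unit3 k) = (if j = k then 1 else 0)"
  by (auto simp: unit3_def)

lemma mdeg_unit3 [simp]: "mdeg (unit3 k) = 1"
  by (auto simp: unit3_def)

lemma madd_unit3E:
  assumes "k < 3" "deg_in k a \<ge> 1"
  obtains b where "a = madd (unit3 k) b"
proof -
  obtain x y z where "a = (x, y, z)"
    by (cases a)
  then have "a = madd (unit3 k) (if k = 0 then (x - 1, y, z) else if k = 1 then (x, y - 1, z)
      else (x, y, z - 1))"
    using assms by (auto simp: unit3_def)
  then show thesis
    using that by blast
qed

lemma monoms_1: "monoms 1 = unit3 ` {0,1,2}"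
proof
  show "monoms 1 \<subseteq> unit3 ` {0,1,2}"
  proof
    fix a assume "a \<in> monoms 1"
    then obtain x y z where "a = (x,y,z)" "x + y + z = 1"
      unfolding monoms_def by (cases a) auto
    then have "a = unit3 0 \<or> a = unit3 1 \<or> a = unit3 2"
      by (auto simp: unit3_def)
    then show "a \<in> unit3 ` {0,1,2}"
      by blast
  qed
  show "unit3 ` {0,1,2} \<subseteq> monoms 1"
    by (auto simp: monoms_def)
qed

lemma linear_form_expansion:
  assumes "homog 1 l"
  shows "l = (\<Sum>k\<in>{0,1,2}. scale3 (l (unit3 k)) (monom3 (unit3 k) :: 'k::field poly3))"
proof -
  have "inj_on unit3 {0,1,2}"
    by (auto simp: inj_on_def unit3_def)
  moreover have "l = (\<Sum>a\<in>unit3 ` {0,1,2}. scale3 (l a) (monom3 a))"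
    using poly3_expansion[of "unit3 ` {0,1,2}" l] supp3_subset_monoms[OF assms] monoms_1 by simp
  ultimately show ?thesis
    by (simp add: sum.reindex)
qed

lemma act_linear_form:
  assumes "homog 1 l"
  shows "act l H =
    (\<Sum>k\<in>{0,1,2}. scale3 (l (unit3 k)) (act (monom3 (unit3 k)) (H :: 'k::field_char_0 poly3)))"
proof -
  have "act l H = act (\<Sum>k\<in>{0,1,2}. scale3 (l (unit3 k)) (monom3 (unit3 k))) H"
    using linear_form_expansion[OF assms] by simp
  also have "\<dots> = (\<Sum>k\<in>{0,1,2}. act (scale3 (l (unit3 k)) (monom3 (unit3 k))) H)"
    by (rule act_sum_left) (auto intro: finite_subset[OF supp3_scale3] simp: supp3_monom3)
  finally show ?thesis
    by (simp add: act_scale3_left[OF finite_supp3_monom3])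
qed

lemma linear_form_coeff_nonzeroE:
  assumes "homog 1 l" "l \<noteq> (0 :: 'k::field poly3)"
  obtains k where "k < 3" "l (unit3 k) \<noteq> 0"
proof -
  have "\<exists>k\<in>{0,1,2}. l (unit3 k) \<noteq> 0"
    using linear_form_expansion[OF assms(1)] assms(2) by (auto simp: fun_eq_iff)
  then obtain k where "k \<in> {0,1,2}" "l (unit3 k) \<noteq> 0"
    by blast
  moreover from this have "k < 3"
    by auto
  ultimately show thesis
    using that by blast
qed

section \<open>Hilbert functions of inverse systems\<close>

definition hpart :: "nat \<Rightarrow> 'k::zero poly3 \<Rightarrow> 'k poly3" where
  "hpart j g = (\<lambda>a. if mdeg a = j then g a else 0)"

text \<open>\<^term>\<open>act g G\<close> is additive in \<open>g\<close> only for finitely supported \<open>g\<close> (it sums over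
  \<^term>\<open>supp3 g\<close>); restricting \<open>g\<close> to its degree-\<open>j\<close> part first gives a map that is linear on
  all polynomials and agrees with \<open>g \<mapsto> g \<circ> G\<close> on \<^term>\<open>graded j\<close>.\<close>

definition deriv_map :: "'k::field poly3 \<Rightarrow> nat \<Rightarrow> 'k poly3 \<Rightarrow> 'k poly3" where
  "deriv_map G j g = act (hpart j g) G"

definition derivs :: "'k::field poly3 \<Rightarrow> nat \<Rightarrow> 'k poly3 set" where
  "derivs G j = (\<lambda>g. act g G) ` graded j"

lemma homog_hpart: "homog j (hpart j g)"
  unfolding homog_def hpart_def by auto

lemma finite_supp3_hpart: "finite (supp3 (hpart j g))"
  using finite_supp3_homog[OF homog_hpart] .

lemma hpart_graded: "g \<in> graded j \<Longrightarrow> hpart j g = g"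
  unfolding hpart_def graded_def by (rule ext) (metis homogD mem_Collect_eq)

lemma deriv_map_graded: "g \<in> graded j \<Longrightarrow> deriv_map G j g = act g G"
  by (simp add: deriv_map_def hpart_graded)

lemma module_hom_deriv_map: "module_hom scale3 scale3 (deriv_map (G :: 'k::field poly3) j)"
proof -
  have "hpart j (x + y) = hpart j x + hpart j y" "hpart j (scale3 c x) = scale3 c (hpart j x)"
    for x y :: "'k poly3" and c
    by (auto simp: hpart_def)
  then show ?thesis
    unfolding module_hom_iff deriv_map_def
    by (simp add: VS.module_axioms act_add_left[OF finite_supp3_hpart finite_supp3_hpart]
        act_scale3_left[OF finite_supp3_hpart])
qed

lemma derivs_eq_image: "derivs G j = deriv_map G j ` graded j"
  unfolding derivs_def by (simp add: deriv_map_graded)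

lemma subspace_derivs: "VS.subspace (derivs G j)"
  unfolding derivs_eq_image
  by (rule module_hom.subspace_image[OF module_hom_deriv_map graded_subspace])

lemma finite_dim_derivs: "VS.finite_dim (derivs G j)"
proof -
  have "derivs G j = VS.span (deriv_map G j ` monom3 ` monoms j)"
    unfolding derivs_eq_image graded_eq_span module_hom.span_image[OF module_hom_deriv_map] ..
  then show ?thesis
    using VS.finite_dim_span[OF finite_imageI[OF finite_imageI[OF finite_monoms]]] by simp
qed

lemma hilb_eq_dim_derivs: "hilb G j = VS.dim (derivs G j)"
proof -
  have "{v \<in> graded j. deriv_map G j v = 0} = graded j \<inter> Ann G"
    unfolding Ann_def is_poly3_def using deriv_map_graded finite_supp3_graded by fastforce
  then show ?thesis
    unfolding hilb_def dim3_def derivs_eq_image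
    using VS.rank_nullity_finite_dim[OF module_hom_deriv_map[of G j] graded_subspace finite_dim_graded]
    by simp
qed

lemma hilb_zero_poly: "hilb (0 :: 'k::field poly3) j = 0"
proof -
  have "derivs (0 :: 'k poly3) j = {0}"
    unfolding derivs_def graded_def using homog_zero by auto
  then show ?thesis
    unfolding hilb_eq_dim_derivs
    using VS.dim_span[of "{} :: 'k poly3 set"] VS.dim_eq_card_independent[OF VS.independent_empty]
    by simp
qed

lemma hilb_degree_0:
  assumes "G \<noteq> (0 :: 'k::field_char_0 poly3)"
  shows "hilb G 0 = 1"
proof -
  have "monoms 0 = {(0,0,0)}" "monom3 (0,0,0) = (one3 :: 'k poly3)"
    by (auto simp: monoms_def monom3_def one3_def)
  moreover have "deriv_map G 0 one3 = G"
    using deriv_map_graded[of one3 0 G] homog_one3 by (simp add: graded_def)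
  ultimately have "derivs G 0 = VS.span {G}"
    unfolding derivs_eq_image graded_eq_span module_hom.span_image[OF module_hom_deriv_map, symmetric]
    by simp
  then show ?thesis
    unfolding hilb_eq_dim_derivs using assms VS.dim_span_eq_card_independent[of "{G}"] by simp
qed

lemma homog_derivs: "homog D G \<Longrightarrow> v \<in> derivs G j \<Longrightarrow> homog (D - j) v"
  unfolding derivs_def graded_def using homog_act by blast

lemma eq_0_if_derivs_vanish_at_origin:
  assumes "homog e v" "\<And>g. g \<in> graded e \<Longrightarrow> act g v (0,0,0) = (0 :: 'k::field_char_0)"
  shows "v = 0"
proof
  fix a
  have "act (monom3 a) v (0,0,0) = v a * of_nat (dcoef a (0,0,0))"
    using act_eq_sum[of "{a}" "monom3 a" v "(0,0,0)"] unfolding supp3_monom3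
    by (simp add: monom3_def)
  moreover have "(monom3 a :: 'k poly3) \<in> graded e" if "v a \<noteq> 0"
    using homog_monom3[of a, where 'k='k] homogD[OF assms(1) that] unfolding graded_def by simp
  ultimately show "v a = 0 a"
    using assms(2) of_nat_dcoef_nonzero[of a "(0,0,0)", where 'k='k] by fastforce
qed

lemma eq_0_if_pairing_vanishes:
  fixes G :: "'k::field_char_0 poly3"
  assumes G: "homog D G" and v: "v \<in> derivs G j" and R: "finite R" "R \<subseteq> graded (D - j)"
    and span: "derivs G (D - j) \<subseteq> VS.span ((\<lambda>h. act h G) ` R)"
    and vanish: "\<And>h. h \<in> R \<Longrightarrow> act h v (0,0,0) = 0"
  shows "v = 0"
proof (rule eq_0_if_derivs_vanish_at_origin[OF homog_derivs[OF G v]])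
  fix g :: "'k poly3" assume g: "g \<in> graded (D - j)"
  obtain f where f: "f \<in> graded j" "v = act f G"
    using v unfolding derivs_def by blast
  let ?W = "(\<lambda>h. act h G) ` R"
  have "act g G \<in> VS.span ?W"
    using g span unfolding derivs_def by blast
  then obtain u where u: "act g G = (\<Sum>w\<in>?W. scale3 (u w) w)"
    using VS.span_finite[of ?W] R(1) by auto
  have "act f w (0,0,0) = 0" if w: "w \<in> ?W" for w
  proof -
    obtain h where "h \<in> R" "w = act h G"
      using w by blast
    then show ?thesis
      using vanish act_commute[OF finite_supp3_graded[OF f(1)] finite_supp3_graded] R(2) f(2)
      by auto
  qed
  moreover have "act g v = act f (act g G)"
    using act_commute[OF finite_supp3_graded[OF g] finite_supp3_graded[OF f(1)]] f(2) by simp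
  ultimately show "act g v (0,0,0) = 0"
    unfolding u act_sum_right[OF finite_imageI[OF R(1)]] act_scale3_right sum_fun_apply by simp
qed

lemma derivs_finite_spanningE:
  obtains R where "finite R" "R \<subseteq> graded j" "card R \<le> hilb G j"
    "derivs G j \<subseteq> VS.span ((\<lambda>h. act h G) ` R)"
proof -
  obtain Bs where Bs: "Bs \<subseteq> derivs G j" "VS.independent Bs" "derivs G j \<subseteq> VS.span Bs"
      "finite Bs" "card Bs = VS.dim (derivs G j)"
    by (rule VS.finite_dim_basis[OF finite_dim_derivs])
  have "\<forall>b\<in>Bs. \<exists>g. g \<in> graded j \<and> act g G = b"
    using Bs(1) unfolding derivs_def by blast
  then obtain rep where rep: "\<And>b. b \<in> Bs \<Longrightarrow> rep b \<in> graded j \<and> act (rep b) G = b"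
    by metis
  show thesis
  proof (rule that)
    show "finite (rep ` Bs)" "rep ` Bs \<subseteq> graded j"
      using Bs(4) rep by auto
    show "card (rep ` Bs) \<le> hilb G j"
      using card_image_le[OF Bs(4)] Bs(5) unfolding hilb_eq_dim_derivs by simp
    have "(\<lambda>h. act h G) ` rep ` Bs = Bs"
      using rep by (force simp: image_image)
    then show "derivs G j \<subseteq> VS.span ((\<lambda>h. act h G) ` rep ` Bs)"
      using Bs(3) by simp
  qed
qed

lemma hilb_le_hilb_complement:
  fixes G :: "'k::field_char_0 poly3"
  assumes G: "homog D G"
  shows "hilb G j \<le> hilb G (D - j)"
proof -
  obtain R where R: "finite R" "R \<subseteq> graded (D - j)" "card R \<le> hilb G (D - j)"
    "derivs G (D - j) \<subseteq> VS.span ((\<lambda>h. act h G) ` R)"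
    by (rule derivs_finite_spanningE)
  obtain idx :: "'k poly3 \<Rightarrow> nat" where idx: "inj_on idx R"
    using finite_imp_inj_to_nat_seg[OF R(1)] by auto
  \<comment> \<open>\<open>\<Phi> v\<close> lists the values \<open>(h \<circ> v)(0)\<close>, \<open>h \<in> R\<close>, as coefficients of distinct monomials.\<close>
  define \<Phi> where "\<Phi> H = (\<Sum>h\<in>R. scale3 (act h H (0,0,0)) (monom3 (idx h, 0::nat, 0::nat)))"
    for H :: "'k poly3"
  have hom: "module_hom scale3 scale3 \<Phi>"
    unfolding module_hom_iff \<Phi>_def
    by (auto simp: VS.module_axioms act_add_right act_scale3_right fun_eq_iff sum_fun_apply
        sum.distrib[symmetric] sum_distrib_left algebra_simps)
  have coeff: "\<Phi> H (idx h, 0, 0) = act h H (0,0,0)" if "h \<in> R" for h H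
  proof -
    have "\<Phi> H (idx h, 0, 0) = (\<Sum>h'\<in>R. if h' = h then act h' H (0,0,0) else 0)"
      unfolding \<Phi>_def sum_fun_apply
      by (rule sum.cong[OF refl]) (use idx that in \<open>auto simp: monom3_def inj_on_eq_iff\<close>)
    then show ?thesis
      using that R(1) by simp
  qed
  have "VS.dim (derivs G j) = VS.dim (\<Phi> ` derivs G j)"
  proof (rule VS.dim_image_eq_if_kernel_trivial[symmetric, OF hom subspace_derivs finite_dim_derivs])
    fix v assume "v \<in> derivs G j" "\<Phi> v = 0"
    then show "v = 0"
      using eq_0_if_pairing_vanishes[OF G _ R(1,2,4)] coeff by (metis zero_fun_apply)
  qed
  also have "\<dots> \<le> card (monom3 ` (\<lambda>h. (idx h, 0::nat, 0::nat)) ` R :: 'k poly3 set)"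
  proof (intro VS.dim_le_card finite_imageI R(1) image_subsetI)
    fix H
    show "\<Phi> H \<in> VS.span (monom3 ` (\<lambda>h. (idx h, 0, 0)) ` R)"
      unfolding \<Phi>_def by (rule VS.span_sum, rule VS.span_scale, rule VS.span_base) auto
  qed
  also have "\<dots> \<le> card R"
    using card_image_le[OF finite_imageI[OF R(1)], of "monom3 :: _ \<Rightarrow> 'k poly3" "\<lambda>h. (idx h, 0::nat, 0::nat)"]
      card_image_le[OF R(1), of "\<lambda>h. (idx h, 0::nat, 0::nat)"] by linarith
  finally show ?thesis
    using R(3) unfolding hilb_eq_dim_derivs by simp
qed

lemma hilb_symmetric:
  fixes G :: "'k::field_char_0 poly3"
  assumes "homog D G" "j \<le> D"
  shows "hilb G j = hilb G (D - j)"
  using hilb_le_hilb_complement[OF assms(1), of j] hilb_le_hilb_complement[OF assms(1), of "D - j"]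
    assms(2) by simp

section \<open>Eliminating one variable\<close>

definition graded_without :: "nat \<Rightarrow> nat \<Rightarrow> 'k::field poly3 set" where
  "graded_without k i = {p. homog i p \<and> (\<forall>a. p a \<noteq> 0 \<longrightarrow> deg_in k a = 0)}"

definition derivs_without :: "'k::field poly3 \<Rightarrow> nat \<Rightarrow> nat \<Rightarrow> 'k poly3 set" where
  "derivs_without G k i = (\<lambda>t. act t G) ` graded_without k i"

lemma graded_without_subset: "graded_without k i \<subseteq> graded i"
  unfolding graded_without_def graded_def by blast

lemma graded_without_eq_supp3:
  "graded_without k i = {p. supp3 p \<subseteq> {a. mdeg a = i \<and> deg_in k a = 0}}"
  by (auto simp: graded_without_def homog_def supp3_def)

lemma subspace_graded_without: "VS.subspace (graded_without k i :: 'k::field poly3 set)"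
  unfolding graded_without_eq_supp3 by (rule subspace_supp3_subset)

lemma graded_without_eq_span:
  "graded_without k i = VS.span (monom3 ` {a. mdeg a = i \<and> deg_in k a = 0} :: 'k::field poly3 set)"
proof -
  have "finite {a. mdeg a = i \<and> deg_in k a = 0}"
    using finite_monoms[of i] by (rule finite_subset[rotated]) (auto simp: monoms_def)
  then show ?thesis
    unfolding graded_without_eq_supp3 by (simp add: span_monom3)
qed

lemma finite_dim_graded_without: "VS.finite_dim (graded_without k i :: 'k::field poly3 set)"
  using VS.finite_dim_subset[OF finite_dim_graded graded_without_subset] .

lemma card_monoms_without:
  assumes "k < 3"
  shows "card {a. mdeg a = i \<and> deg_in k a = 0} = i + 1"
proof -
  define e where "e b = (if k = 0 then (0, b, i - b) else if k = 1 then (b, 0, i - b) else (b, i - b, 0))"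
    for b :: nat
  have "{a. mdeg a = i \<and> deg_in k a = 0} = e ` {..i}"
    using assms unfolding e_def by (auto simp: image_iff)
  moreover have "inj_on e {..i}"
    unfolding e_def by (auto simp: inj_on_def)
  ultimately show ?thesis
    by (simp add: card_image)
qed

lemma dim_graded_without: "k < 3 \<Longrightarrow> VS.dim (graded_without k i :: 'k::field poly3 set) = i + 1"
  unfolding graded_without_eq_span
  by (simp add: VS.dim_eq_card_independent[OF independent_monom3] card_image
      inj_on_subset[OF inj_monom3] card_monoms_without)

lemma derivs_without_eq_image: "derivs_without G k i = deriv_map G i ` graded_without k i"
  unfolding derivs_without_def using graded_without_subset deriv_map_graded
  by (metis (no_types, lifting) image_cong subsetD)

lemma subspace_derivs_without: "VS.subspace (derivs_without G k i)"
  unfolding derivs_without_eq_image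
  by (rule module_hom.subspace_image[OF module_hom_deriv_map subspace_graded_without])

lemma derivs_without_subset: "derivs_without G k i \<subseteq> derivs G i"
  unfolding derivs_without_def derivs_def using graded_without_subset by blast

lemma derivs_act_subset:
  fixes G l :: "'k::field_char_0 poly3"
  assumes "homog 1 l" "i \<ge> 1"
  shows "derivs (act l G) (i - 1) \<subseteq> derivs G i"
proof
  fix y assume "y \<in> derivs (act l G) (i - 1)"
  then obtain u where u: "u \<in> graded (i - 1)" "y = act u (act l G)"
    unfolding derivs_def by blast
  then have "y = act (pmul u l) G"
    using act_pmul[OF finite_supp3_graded[OF u(1)] finite_supp3_homog[OF assms(1)]] by simp
  moreover have "pmul u l \<in> graded i"
    using homog_pmul[of "i - 1" u 1 l] u(1) assms unfolding graded_def by simp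
  ultimately show "y \<in> derivs G i"
    unfolding derivs_def by blast
qed

lemma act_unit3_solve:
  fixes l H :: "'k::field_char_0 poly3"
  assumes "homog 1 l" "k < 3" "l (unit3 k) \<noteq> 0"
  shows "act (monom3 (unit3 k)) H = scale3 (1 / l (unit3 k))
    (act l H - (\<Sum>j\<in>{0,1,2} - {k}. scale3 (l (unit3 j)) (act (monom3 (unit3 j)) H)))"
proof -
  have "act l H = scale3 (l (unit3 k)) (act (monom3 (unit3 k)) H)
      + (\<Sum>j\<in>{0,1,2} - {k}. scale3 (l (unit3 j)) (act (monom3 (unit3 j)) H))"
    unfolding act_linear_form[OF assms(1)] using assms(2) by (subst sum.remove[of _ k]) auto
  then show ?thesis
    using assms(3) by (auto simp: fun_eq_iff field_simps)
qed

text \<open>Induction on the exponent of \<open>x\<^sub>k\<close>: by \<open>act_unit3_solve\<close>, \<open>x\<^sub>k \<circ> H\<close> is a combination of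
  \<open>l \<circ> H \<in> S\<^sub>i\<^sub>-\<^sub>1 \<circ> (l \<circ> G)\<close> and of terms of smaller degree in \<open>x\<^sub>k\<close>.\<close>
lemma act_monom3_mem_derivs_sums:
  fixes G l :: "'k::field_char_0 poly3"
  assumes l: "homog 1 l" and k: "k < 3" "l (unit3 k) \<noteq> 0" and i: "i \<ge> 1" and a: "mdeg a = i"
  shows "act (monom3 a) G \<in> {x + y |x y. x \<in> derivs_without G k i \<and> y \<in> derivs (act l G) (i - 1)}"
    (is "_ \<in> ?Z")
  using a
proof (induction "deg_in k a" arbitrary: a rule: less_induct)
  case less
  have Z: "VS.subspace ?Z"
    by (rule VS.subspace_sums[OF subspace_derivs_without subspace_derivs])
  show ?case
  proof (cases "deg_in k a = 0")
    case True
    then have "monom3 a \<in> graded_without k i"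
      using less.prems by (auto simp: graded_without_def homog_def monom3_def)
    then show ?thesis
      using VS.sums_subset_left[OF subspace_derivs] unfolding derivs_without_def by blast
  next
    case False
    then obtain b where b: "a = madd (unit3 k) b"
      using madd_unit3E[OF k(1)] by (metis less_one not_le)
    then have b_deg: "mdeg b = i - 1" "deg_in k b < deg_in k a"
      using less.prems deg_in_unit3[OF k(1) k(1)] by auto
    define H where "H = act (monom3 b) G"
    have "act l H = act (monom3 b) (act l G)"
      unfolding H_def by (rule act_commute[OF finite_supp3_homog[OF l] finite_supp3_monom3])
    moreover have "(monom3 b :: 'k poly3) \<in> graded (i - 1)"
      using homog_monom3[of b, where 'k='k] b_deg(1) unfolding graded_def by simp
    ultimately have l_H: "act l H \<in> ?Z"
      using VS.sums_subset_right[OF subspace_derivs_without] unfolding derivs_def by blast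
    have "act (monom3 (unit3 j)) H \<in> ?Z" if j: "j \<in> {0,1,2} - {k}" for j
    proof -
      have "deg_in k (madd (unit3 j) b) < deg_in k a" "mdeg (madd (unit3 j) b) = i"
        using j k(1) b_deg i deg_in_unit3[OF k(1), of j] by auto
      then show ?thesis
        unfolding H_def act_monom3_monom3 using less.hyps by blast
    qed
    then have "(\<Sum>j\<in>{0,1,2} - {k}. scale3 (l (unit3 j)) (act (monom3 (unit3 j)) H)) \<in> ?Z"
      by (intro VS.subspace_sum[OF Z] VS.subspace_scale[OF Z])
    then have "act (monom3 (unit3 k)) H \<in> ?Z"
      unfolding act_unit3_solve[OF l k] using VS.subspace_scale[OF Z] VS.subspace_diff[OF Z l_H] by simp
    then show ?thesis
      unfolding H_def b act_monom3_monom3 .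
  qed
qed

lemma derivs_eq_sums:
  fixes G l :: "'k::field_char_0 poly3"
  assumes l: "homog 1 l" and k: "k < 3" "l (unit3 k) \<noteq> 0" and i: "i \<ge> 1"
  shows "derivs G i = {x + y |x y. x \<in> derivs_without G k i \<and> y \<in> derivs (act l G) (i - 1)}"
    (is "_ = ?Z")
proof
  have Z: "VS.subspace ?Z"
    by (rule VS.subspace_sums[OF subspace_derivs_without subspace_derivs])
  show "derivs G i \<subseteq> ?Z"
  proof
    fix v assume "v \<in> derivs G i"
    then obtain f where f: "homog i f" "v = act f G"
      unfolding derivs_def graded_def by blast
    then have "v = act (\<Sum>a\<in>monoms i. scale3 (f a) (monom3 a)) G"
      using poly3_expansion[OF finite_monoms supp3_subset_monoms] by metis
    also have "\<dots> = (\<Sum>a\<in>monoms i. scale3 (f a) (act (monom3 a) G))"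
      by (simp add: act_sum_left[OF finite_monoms] finite_subset[OF supp3_scale3 finite_supp3_monom3]
          act_scale3_left[OF finite_supp3_monom3])
    also have "\<dots> \<in> ?Z"
      using act_monom3_mem_derivs_sums[OF l k i]
      by (intro VS.subspace_sum[OF Z] VS.subspace_scale[OF Z]) (simp add: monoms_def)
    finally show "v \<in> ?Z" .
  qed
  show "?Z \<subseteq> derivs G i"
    using derivs_without_subset derivs_act_subset[OF l i] VS.subspace_add[OF subspace_derivs] by blast
qed

definition redundant :: "nat \<Rightarrow> 'k::field poly3 \<Rightarrow> 'k poly3 \<Rightarrow> nat \<Rightarrow> 'k poly3 set" where
  "redundant k l G i = {t \<in> graded_without k i. act t G \<in> derivs (act l G) (i - 1)}"

lemma redundant_subset: "redundant k l G i \<subseteq> graded_without k i"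
  unfolding redundant_def by blast

lemma subspace_redundant: "VS.subspace (redundant k l G i)"
proof -
  have "redundant k l G i = graded_without k i \<inter> deriv_map G i -` derivs (act l G) (i - 1)"
    unfolding redundant_def using graded_without_subset deriv_map_graded by fastforce
  then show ?thesis
    using VS.subspace_inter[OF subspace_graded_without
        module_hom.subspace_vimage[OF module_hom_deriv_map subspace_derivs]]
    by simp
qed

lemma finite_dim_redundant: "VS.finite_dim (redundant k l G i)"
  using VS.finite_dim_subset[OF finite_dim_graded_without redundant_subset] .

lemma dim_redundant_le: "k < 3 \<Longrightarrow> VS.dim (redundant k l G i) \<le> i + 1"
  using VS.dim_le_finite_dim[OF finite_dim_graded_without redundant_subset] dim_graded_without
  by metis

text \<open>Grassmann's formula for the sum decomposition of \<^term>\<open>derivs G i\<close>, together with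
  rank-nullity for \<open>t \<mapsto> t \<circ> G\<close> on \<^term>\<open>graded_without k i\<close> and on
  \<^term>\<open>redundant k l G i\<close>: the two kernels agree and the second image is the intersection.\<close>

lemma hilb_add_dim_redundant:
  fixes G l :: "'k::field_char_0 poly3"
  assumes l: "homog 1 l" and k: "k < 3" "l (unit3 k) \<noteq> 0" and i: "i \<ge> 1"
  shows "hilb G i + VS.dim (redundant k l G i) = (i + 1) + hilb (act l G) (i - 1)"
proof -
  let ?X = "derivs_without G k i"
  let ?W = "derivs (act l G) (i - 1)"
  let ?f = "deriv_map G i"
  have f_without: "?f t = act t G" if "t \<in> graded_without k i" for t
    using that graded_without_subset deriv_map_graded by blast
  have grassmann: "hilb G i + VS.dim (?X \<inter> ?W) = VS.dim ?X + hilb (act l G) (i - 1)"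
    unfolding hilb_eq_dim_derivs derivs_eq_sums[OF l k i]
    by (rule VS.dim_sums_Int_finite_dim[OF subspace_derivs_without subspace_derivs])
      (use finite_dim_derivs derivs_eq_sums[OF l k i] in metis)
  have "{t \<in> redundant k l G i. ?f t = 0} = {t \<in> graded_without k i. ?f t = 0}"
    unfolding redundant_def using f_without VS.subspace_0[OF subspace_derivs] by auto
  moreover have "?f ` redundant k l G i = ?X \<inter> ?W"
    unfolding redundant_def derivs_without_def using f_without by auto
  ultimately have "VS.dim (redundant k l G i) + VS.dim ?X
      = VS.dim (graded_without k i :: 'k poly3 set) + VS.dim (?X \<inter> ?W)"
    using VS.rank_nullity_finite_dim[OF module_hom_deriv_map[of G i] subspace_redundant[of k l G i]
        finite_dim_redundant]
      VS.rank_nullity_finite_dim[OF module_hom_deriv_map[of G i] subspace_graded_without[of k i]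
        finite_dim_graded_without]
    unfolding derivs_without_eq_image by simp
  then show ?thesis
    using grassmann dim_graded_without[OF k(1), of i, where 'k='k] by linarith
qed

lemma redundant_subset_redundant_act:
  fixes G l :: "'k::field_char_0 poly3"
  assumes l: "homog 1 l"
  shows "redundant k l G i \<subseteq> redundant k l (act l G) i"
proof
  fix t assume "t \<in> redundant k l G i"
  then obtain u where t: "t \<in> graded_without k i" and u: "u \<in> graded (i - 1)" "act t G = act u (act l G)"
    unfolding redundant_def derivs_def by blast
  have fin: "finite (supp3 l)" "finite (supp3 t)" "finite (supp3 u)"
    using finite_supp3_homog[OF l] finite_supp3_graded u(1) t graded_without_subset by blast+
  have "act t (act l G) = act u (act l (act l G))"
    using act_commute[OF fin(2,1)] act_commute[OF fin(1,3)] u(2) by simp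
  then show "t \<in> redundant k l (act l G) i"
    using t u(1) unfolding redundant_def derivs_def by blast
qed

lemma module_hom_pmul_monom3: "module_hom scale3 scale3 (pmul (monom3 b) :: 'k::field poly3 \<Rightarrow> _)"
proof -
  have "pmul (monom3 b) (x + y) c = pmul (monom3 b) x c + pmul (monom3 b) y c \<and>
    pmul (monom3 b) (scale3 r x) c = r * pmul (monom3 b) x c" for x y :: "'k poly3" and r c
  proof (cases "\<exists>a. c = madd b a")
    case True
    then show ?thesis
      by (auto simp: pmul_monom3_madd)
  next
    case False
    then have "\<And>a. c \<noteq> madd b a"
      by blast
    then show ?thesis
      by (simp add: pmul_monom3_eq_0)
  qed
  then show ?thesis
    unfolding module_hom_iff by (simp add: VS.module_axioms fun_eq_iff)
qed

lemma pmul_monom3_eq_0_iff: "pmul (monom3 b) x = 0 \<longleftrightarrow> x = (0 :: 'k::comm_semiring_1 poly3)"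
proof
  assume "pmul (monom3 b) x = 0"
  then show "x = 0"
    using pmul_monom3_madd[of b x] by (metis zero_fun_apply ext)
qed (rule ext, simp add: pmul_def supp3_def)

lemma pmul_unit3_redundant:
  fixes G l :: "'k::field_char_0 poly3"
  assumes l: "homog 1 l" and k: "k < 3" "j < 3" "j \<noteq> k" and i: "i \<ge> 1"
    and t: "t \<in> redundant k l G i"
  shows "pmul (monom3 (unit3 j)) t \<in> redundant k l G (Suc i)"
proof -
  obtain u where t': "t \<in> graded_without k i" and u: "u \<in> graded (i - 1)" "act t G = act u (act l G)"
    using t unfolding redundant_def derivs_def by blast
  have hom_x: "homog 1 (monom3 (unit3 j) :: 'k poly3)"
    using homog_monom3[of "unit3 j"] by simp
  have "pmul (monom3 (unit3 j)) t \<in> graded_without k (Suc i)"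
  proof -
    have "deg_in k c = 0" if c: "pmul (monom3 (unit3 j)) t c \<noteq> 0" for c
    proof -
      obtain a where a: "c = madd (unit3 j) a" "t a \<noteq> 0"
        using c by (rule pmul_monom3_nonzeroE)
      then have "deg_in k a = 0"
        using t' unfolding graded_without_def by blast
      then show ?thesis
        unfolding a(1) using deg_in_unit3[OF k(1,2)] k(3) by simp
    qed
    then show ?thesis
      using homog_pmul[OF hom_x] t' unfolding graded_without_def by auto
  qed
  moreover have "act (pmul (monom3 (unit3 j)) t) G = act (pmul (monom3 (unit3 j)) u) (act l G)"
    using act_pmul[OF finite_supp3_monom3 finite_supp3_graded[OF u(1)]]
      act_pmul[OF finite_supp3_monom3 finite_supp3_graded[OF subsetD[OF graded_without_subset t']]] u(2)
    by simp
  moreover have "pmul (monom3 (unit3 j)) u \<in> graded (Suc i - 1)"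
    using homog_pmul[OF hom_x, of "i - 1" u] u(1) i unfolding graded_def by simp
  ultimately show ?thesis
    unfolding redundant_def derivs_def by blast
qed

text \<open>Among the terms of nonzero elements of \<open>U\<close> take one with minimal exponent of \<open>x\<^sub>j\<^sub>1\<close>;
  multiplied by \<open>x\<^sub>j\<^sub>2\<close> it keeps that exponent, which no term of \<open>x\<^sub>j\<^sub>1 U\<close> has.\<close>
lemma pmul_unit3_not_in_image:
  fixes U :: "'k::comm_semiring_1 poly3 set"
  assumes j: "j1 < 3" "j2 < 3" "j1 \<noteq> j2" and U: "t0 \<in> U" "t0 \<noteq> 0"
  obtains t where "t \<in> U" "pmul (monom3 (unit3 j2)) t \<notin> pmul (monom3 (unit3 j1)) ` U"
proof -
  define P where "P n \<longleftrightarrow> (\<exists>t\<in>U. \<exists>b. t b \<noteq> 0 \<and> deg_in j1 b = n)" for n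
  obtain b0 where "t0 b0 \<noteq> 0"
    using U(2) by (metis ext zero_fun_apply)
  then have "P (deg_in j1 b0)"
    unfolding P_def using U(1) by blast
  then obtain t b where t: "t \<in> U" "t b \<noteq> 0" and b: "deg_in j1 b = (LEAST n. P n)"
    using LeastI[of P] unfolding P_def by blast
  have "pmul (monom3 (unit3 j2)) t \<noteq> pmul (monom3 (unit3 j1)) \<sigma>" if "\<sigma> \<in> U" for \<sigma>
  proof
    assume eq: "pmul (monom3 (unit3 j2)) t = pmul (monom3 (unit3 j1)) \<sigma>"
    have "pmul (monom3 (unit3 j1)) \<sigma> (madd (unit3 j2) b) \<noteq> 0"
      using t(2) unfolding eq[symmetric] pmul_monom3_madd .
    then obtain a where a: "madd (unit3 j2) b = madd (unit3 j1) a" "\<sigma> a \<noteq> 0"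
      by (rule pmul_monom3_nonzeroE)
    from arg_cong[OF a(1), of "deg_in j1"] have "deg_in j1 b = deg_in j1 a + 1"
      using deg_in_unit3[OF j(1) j(2)] deg_in_unit3[OF j(1) j(1)] j(3) by simp
    moreover have "P (deg_in j1 a)"
      unfolding P_def using that a(2) by blast
    ultimately show False
      using b Least_le[of P "deg_in j1 a"] by simp
  qed
  then show thesis
    using that t(1) by blast
qed

text \<open>Multiplication by \<open>x\<^sub>j\<^sub>1\<close> embeds \<open>U\<^sub>i\<close> into \<open>U\<^sub>i\<^sub>+\<^sub>1\<close>, and multiplication by
  \<open>x\<^sub>j\<^sub>2\<close> produces an element of \<open>U\<^sub>i\<^sub>+\<^sub>1\<close> outside that image.\<close>

lemma dim_redundant_Suc:
  fixes G l :: "'k::field_char_0 poly3"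
  assumes l: "homog 1 l" and k: "k < 3" and i: "i \<ge> 1"
    and nonzero: "VS.dim (redundant k l G i) \<ge> 1"
  shows "VS.dim (redundant k l G i) + 1 \<le> VS.dim (redundant k l G (Suc i))"
proof -
  define j1 where "j1 = (if k = 0 then 1 else 0 :: nat)"
  define j2 where "j2 = (if k = 2 then 1 else 2 :: nat)"
  have j: "j1 < 3" "j2 < 3" "j1 \<noteq> k" "j2 \<noteq> k" "j1 \<noteq> j2"
    unfolding j1_def j2_def using k by auto
  let ?U = "redundant k l G i"
  let ?M = "pmul (monom3 (unit3 j1)) ` ?U"
  have "VS.dim ?M = VS.dim ?U"
    by (rule VS.dim_image_eq_if_kernel_trivial[OF module_hom_pmul_monom3 subspace_redundant
          finite_dim_redundant]) (simp add: pmul_monom3_eq_0_iff)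
  moreover obtain t0 where "t0 \<in> ?U" "t0 \<noteq> 0"
    using nonzero VS.dim_le_card[of ?U "{}"] by fastforce
  then obtain t where "t \<in> ?U" "pmul (monom3 (unit3 j2)) t \<notin> ?M"
    using pmul_unit3_not_in_image[OF j(1,2,5)] by blast
  then have "VS.dim ?M < VS.dim (redundant k l G (Suc i))"
    using VS.dim_less_finite_dim[OF finite_dim_redundant
        module_hom.subspace_image[OF module_hom_pmul_monom3 subspace_redundant]]
      pmul_unit3_redundant[OF l k j(2,4) i] pmul_unit3_redundant[OF l k j(1,3) i]
    by blast
  ultimately show ?thesis
    by simp
qed

section \<open>The numerical constraints\<close>

text \<open>Macaulay's bound for the Hilbert function of a graded quotient of a polynomial ring in two
  variables, imposed from degree 1 on.\<close>

definition macaulay_2var :: "(nat \<Rightarrow> nat) \<Rightarrow> bool" where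
  "macaulay_2var q \<longleftrightarrow> (\<forall>i\<ge>1. q i \<le> i + 1) \<and> (\<forall>i\<ge>1. q i \<le> i \<longrightarrow> q (Suc i) \<le> q i)"

lemma macaulay_2var_le: "macaulay_2var q \<Longrightarrow> 1 \<le> i \<Longrightarrow> q i \<le> i + 1"
  unfolding macaulay_2var_def by blast

lemma macaulay_2var_antimono:
  assumes "macaulay_2var q" "1 \<le> i" "q i \<le> i" "i \<le> n"
  shows "q n \<le> q i"
  using assms(4)
proof (induction n rule: dec_induct)
  case (step n)
  then have "q (Suc n) \<le> q n"
    using assms(1-3) unfolding macaulay_2var_def by auto
  then show ?case
    using step.IH by linarith
qed simp

lemma macaulay_2var_full:
  assumes "macaulay_2var q" "1 \<le> i" "i \<le> n" "i < q n"
  shows "q i = i + 1"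
proof (rule ccontr)
  assume "q i \<noteq> i + 1"
  then have "q i \<le> i"
    using macaulay_2var_le[OF assms(1,2)] by simp
  then show False
    using macaulay_2var_antimono[OF assms(1,2) _ assms(3)] assms(4) by fastforce
qed

definition hilb_diff :: "nat \<Rightarrow> 'k::field poly3 \<Rightarrow> 'k poly3 \<Rightarrow> nat \<Rightarrow> nat" where
  "hilb_diff k l G i = i + 1 - VS.dim (redundant k l G i)"

lemma hilb_eq_hilb_diff_add:
  fixes G l :: "'k::field_char_0 poly3"
  assumes "homog 1 l" "k < 3" "l (unit3 k) \<noteq> 0" "i \<ge> 1"
  shows "hilb G i = hilb_diff k l G i + hilb (act l G) (i - 1)"
  using hilb_add_dim_redundant[OF assms, of G] dim_redundant_le[OF assms(2), of l G i]
  unfolding hilb_diff_def by linarith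

lemma macaulay_2var_hilb_diff:
  fixes G l :: "'k::field_char_0 poly3"
  assumes "homog 1 l" "k < 3"
  shows "macaulay_2var (hilb_diff k l G)"
  unfolding macaulay_2var_def hilb_diff_def
proof (intro conjI allI impI)
  fix i :: nat assume i: "1 \<le> i" "i + 1 - VS.dim (redundant k l G i) \<le> i"
  then have nonzero: "1 \<le> VS.dim (redundant k l G i)"
    by linarith
  show "Suc i + 1 - VS.dim (redundant k l G (Suc i)) \<le> i + 1 - VS.dim (redundant k l G i)"
    using dim_redundant_Suc[OF assms i(1) nonzero] dim_redundant_le[OF assms(2), of l G "Suc i"]
    by linarith
qed simp

lemma hilb_diff_act_le:
  fixes G l :: "'k::field_char_0 poly3"
  assumes "homog 1 l"
  shows "hilb_diff k l (act l G) i \<le> hilb_diff k l G i"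
  using VS.dim_le_finite_dim[OF finite_dim_redundant redundant_subset_redundant_act[OF assms]]
  unfolding hilb_diff_def by (simp add: diff_le_mono2)

text \<open>\<open>h2\<close>, \<open>h1\<close>, \<open>h0\<close> stand for the Hilbert functions of \<open>A\<^sup>(\<^sup>2\<^sup>)\<close>, \<open>A\<^sup>(\<^sup>1\<^sup>)\<close>
  and \<open>A\<close>, and \<open>q1\<close>, \<open>q0\<close> for their first differences \<open>h1 i - h2 (i - 1)\<close> and
  \<open>h0 i - h1 (i - 1)\<close>; the difference for \<open>h2\<close> is \<open>h2\<close> itself because \<open>l\<^sup>3 \<circ> F = 0\<close>.\<close>

locale hilbert_triple =
  fixes h2 h1 h0 q1 q0 :: "nat \<Rightarrow> nat" and m :: nat
  assumes m_pos: "1 \<le> m"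
    and h_0: "h2 0 = 1" "h1 0 = 1" "h0 0 = 1"
    and h1_eq: "\<And>i. 1 \<le> i \<Longrightarrow> h1 i = q1 i + h2 (i - 1)"
    and h0_eq: "\<And>i. 1 \<le> i \<Longrightarrow> h0 i = q0 i + h1 (i - 1)"
    and macaulay: "macaulay_2var h2" "macaulay_2var q1" "macaulay_2var q0"
    and q1_le_q0: "\<And>i. 1 \<le> i \<Longrightarrow> q1 i \<le> q0 i"
    and h2_sym: "\<And>i. i \<le> 2 * m - 2 \<Longrightarrow> h2 i = h2 (2 * m - 2 - i)"
    and h1_sym: "\<And>i. i \<le> 2 * m - 1 \<Longrightarrow> h1 i = h1 (2 * m - 1 - i)"
    and h0_sym: "\<And>i. i \<le> 2 * m \<Longrightarrow> h0 i = h0 (2 * m - i)"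
begin

lemma h2_full: "i \<le> m - 1 \<Longrightarrow> i < h2 (m - 1) \<Longrightarrow> h2 i = i + 1"
  using macaulay_2var_full[OF macaulay(1), of i "m - 1"] h_0(1) by (cases "i = 0") auto

context
  fixes r s t :: nat
  assumes r: "r = h2 (m - 1)" and s: "s = h1 (m - 1)" and t: "t = h0 m"
    and m2: "2 \<le> m" and r_pos: "1 \<le> r" and r_le: "r \<le> m - 1" and s_ge: "2 * r \<le> s"
    and s_le: "s \<le> m + r" and t_ge: "2 * s \<le> t + r" and t_le: "t \<le> m + s + 1"
begin

lemma h2_low: "i \<le> r - 1 \<Longrightarrow> h2 i = i + 1"
  using h2_full[of i] r r_pos r_le by linarith

lemma h2_le_r: "m - 1 \<le> i \<Longrightarrow> h2 i \<le> r"
  using macaulay_2var_antimono[OF macaulay(1), of "m - 1" i] r r_le m2 by simp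

lemma h2_const: "r \<le> i \<Longrightarrow> i \<le> m - 1 \<Longrightarrow> h2 i = r"
proof -
  assume i: "r \<le> i" "i \<le> m - 1"
  have "h2 i \<le> r"
    using h2_sym[of i] h2_le_r[of "2 * m - 2 - i"] i by simp
  moreover have "r \<le> h2 i"
    using macaulay_2var_antimono[OF macaulay(1), of i "m - 1"] r r_pos i by linarith
  ultimately show ?thesis
    by simp
qed

lemma h2_const': "r \<le> i + 1 \<Longrightarrow> i \<le> m - 1 \<Longrightarrow> h2 i = r"
  using h2_const[of i] h2_low[of i] r_pos by (cases "r \<le> i") auto

lemma h2_antimono: "r \<le> i \<Longrightarrow> i \<le> i' \<Longrightarrow> h2 i' \<le> h2 i"
proof -
  assume i: "r \<le> i" "i \<le> i'"
  have "h2 i \<le> r"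
    using h2_const[of i] h2_le_r[of i] i(1) by (cases "i \<le> m - 1") auto
  then show ?thesis
    using macaulay_2var_antimono[OF macaulay(1), of i i'] i r_pos by linarith
qed

lemma h1_at_m: "h1 m = s"
  using h1_sym[of m] m2 s by (simp add: numeral_2_eq_2)

lemma q1_at_m: "q1 m = s - r"
  using h1_eq[of m] h1_at_m r m2 by simp

lemma q1_antimono: "m \<le> i \<Longrightarrow> i \<le> i' \<Longrightarrow> q1 i' \<le> q1 i"
proof -
  assume i: "m \<le> i" "i \<le> i'"
  have "q1 i \<le> q1 m"
    using macaulay_2var_antimono[OF macaulay(2), of m i] q1_at_m s_le m2 i(1) by simp
  then show ?thesis
    using macaulay_2var_antimono[OF macaulay(2), of i i'] q1_at_m s_le m2 i by simp
qed

lemma h1_antimono: "m - 1 \<le> i \<Longrightarrow> i \<le> i' \<Longrightarrow> h1 i' \<le> h1 i"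
proof -
  have from_m: "h1 i' \<le> h1 i" if "m \<le> i" "i \<le> i'" for i i'
  proof -
    have "h2 (i' - 1) \<le> h2 (i - 1)"
      using that r_le by (intro h2_antimono) linarith+
    then show ?thesis
      using q1_antimono[OF that] h1_eq[of i] h1_eq[of i'] that m2 by simp
  qed
  assume i: "m - 1 \<le> i" "i \<le> i'"
  then consider "i' = i" | "m \<le> i" | "i = m - 1" "m \<le> i'"
    by linarith
  then show ?thesis
  proof cases
    case 3
    then show ?thesis
      using from_m[of m i'] h1_at_m s by simp
  qed (use from_m i in auto)
qed

lemma h1_mono: "i \<le> i' \<Longrightarrow> i' \<le> m - 1 \<Longrightarrow> h1 i \<le> h1 i'"
  using h1_sym[of i] h1_sym[of i'] h1_antimono[of "2 * m - 1 - i'" "2 * m - 1 - i"] m2 by simp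

lemma q1_full: "1 \<le> i \<Longrightarrow> i < s - r \<Longrightarrow> q1 i = i + 1"
  using macaulay_2var_full[OF macaulay(2), of i m] q1_at_m s_le by simp

lemma q1_const: "s - r \<le> i \<Longrightarrow> i \<le> m - 1 \<Longrightarrow> q1 i = s - r"
proof -
  assume i: "s - r \<le> i" "i \<le> m - 1"
  then have "1 \<le> i" "r \<le> i"
    using s_ge r_pos by linarith+
  then have "q1 i \<le> s - r"
    using h1_eq[of i] h2_const'[of "i - 1"] h1_mono[OF i(2) order_refl] s i(2) by simp
  moreover have "q1 m \<le> q1 i"
    using macaulay_2var_antimono[OF macaulay(2), of i m] \<open>1 \<le> i\<close> calculation i by simp
  ultimately show ?thesis
    using q1_at_m by simp
qed

lemma h1_low: "i \<le> r - 1 \<Longrightarrow> h1 i = 2 * i + 1"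
  using h_0(2) h1_eq[of i] q1_full[of i] h2_low[of "i - 1"] s_ge r_pos by (cases "i = 0") auto

lemma h1_mid: "r \<le> i \<Longrightarrow> i + r + 1 \<le> s \<Longrightarrow> h1 i = i + r + 1"
  using h1_eq[of i] q1_full[of i] h2_const'[of "i - 1"] r_pos s_le by simp

lemma h1_const: "s \<le> i + r \<Longrightarrow> i \<le> m - 1 \<Longrightarrow> h1 i = s"
  using h1_eq[of i] q1_const[of i] h2_const'[of "i - 1"] s_ge r_pos by simp

lemma q0_at_m: "q0 m = t - s"
  using h0_eq[of m] m2 t s by simp

lemma q0_full: "1 \<le> i \<Longrightarrow> i < t - s \<Longrightarrow> i \<le> m \<Longrightarrow> q0 i = i + 1"
  using macaulay_2var_full[OF macaulay(3), of i m] q0_at_m by simp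

lemma h0_mono:
  assumes "t - s \<le> m" "i \<le> i'" "i' \<le> m"
  shows "h0 i \<le> h0 i'"
proof -
  have q0_antimono: "q0 i' \<le> q0 i" if "m \<le> i" "i \<le> i'" for i i'
  proof -
    have "q0 i \<le> q0 m"
      using macaulay_2var_antimono[OF macaulay(3), of m i] q0_at_m assms(1) m2 that(1) by simp
    then show ?thesis
      using macaulay_2var_antimono[OF macaulay(3), of i i'] q0_at_m assms(1) m2 that by simp
  qed
  have "h0 i' \<le> h0 i" if "m \<le> i" "i \<le> i'" for i i'
  proof -
    have "h1 (i' - 1) \<le> h1 (i - 1)"
      using that by (intro h1_antimono) linarith+
    then show ?thesis
      using q0_antimono[OF that] h0_eq[of i] h0_eq[of i'] that m2 by simp
  qed
  then show ?thesis
    using h0_sym[of i] h0_sym[of i'] assms(2,3) by simp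
qed

lemma q0_const:
  assumes "t - s \<le> m" "t - s \<le> i" "i \<le> m" and h1_pred: "h1 (i - 1) = s"
  shows "q0 i = t - s"
proof -
  have i: "1 \<le> i"
    using assms(2) t_ge s_ge r_pos by linarith
  then have "q0 i \<le> t - s"
    using h0_mono[OF assms(1,3) order_refl] h0_eq[of i] h0_eq[of m] h1_pred s q0_at_m m2 by simp
  moreover have "q0 m \<le> q0 i"
    using macaulay_2var_antimono[OF macaulay(3) i] calculation assms(2,3) by simp
  ultimately show ?thesis
    using q0_at_m by simp
qed

lemma shape_h2_h1:
  "(\<forall>i. i \<le> r - 1 \<longrightarrow> h2 i = i + 1)
    \<and> (\<forall>i. r \<le> i \<and> i \<le> m - 1 \<longrightarrow> h2 i = r)
    \<and> (\<forall>i. i \<le> r - 1 \<longrightarrow> h1 i = 2 * i + 1)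
    \<and> (\<forall>i. r \<le> i \<and> i + r + 1 \<le> s \<longrightarrow> h1 i = i + r + 1)
    \<and> (\<forall>i. s \<le> i + r \<and> i \<le> m - 1 \<longrightarrow> h1 i = s)"
  using h2_low h2_const h1_low h1_mid h1_const by blast

lemma shape_h0_t_eq_3r:
  "t = 3 * r \<longrightarrow>
         (h0 0 = 1
          \<and> (\<forall>i. 1 \<le> i \<and> i \<le> r - 1 \<longrightarrow> h0 i = 3 * i)
          \<and> (\<forall>i. r \<le> i \<and> i \<le> m \<longrightarrow> h0 i = 3 * r))
       \<or> (h0 0 = 1
          \<and> (\<forall>i. 1 \<le> i \<and> i \<le> r - 1 \<longrightarrow> h0 i = 3 * i)
          \<and> h0 r = 3 * r - 1
          \<and> (\<forall>i. r + 1 \<le> i \<and> i \<le> m \<longrightarrow> h0 i = 3 * r))" (is "_ \<longrightarrow> ?P")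
proof
  assume t3: "t = 3 * r"
  have s2r: "s = 2 * r" and q0_m: "t - s = r"
    using t_ge t3 s_ge by linarith+
  have low: "h0 i = 3 * i" if "1 \<le> i" "i \<le> r - 1" for i
    using h0_eq[of i] q0_full[of i] h1_low[of "i - 1"] that q0_m r_le by simp
  have high: "h0 i = 3 * r" if "r + 1 \<le> i" "i \<le> m" for i
  proof -
    have "h1 (i - 1) = s"
      using h1_const[of "i - 1"] that s2r by simp
    then show ?thesis
      using h0_eq[of i] q0_const[of i] that q0_m r_le s2r by simp
  qed
  have h0_r: "h0 r = q0 r + (2 * r - 1)"
    using h0_eq[of r] h1_low[of "r - 1"] r_pos by simp
  \<comment> \<open>the source of the two alternatives\<close>
  have "q0 r = r \<or> q0 r = r + 1"
    using macaulay_2var_le[OF macaulay(3) r_pos] q0_at_m q0_m r_le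
      macaulay_2var_antimono[OF macaulay(3) r_pos, of m] by fastforce
  then show ?P
  proof
    assume "q0 r = r + 1"
    then have "h0 r = 3 * r"
      using h0_r r_pos by simp
    then have "\<forall>i. r \<le> i \<and> i \<le> m \<longrightarrow> h0 i = 3 * r"
      using high by (metis Suc_eq_plus1 le_neq_implies_less less_eq_Suc_le)
    then show ?thesis
      using low h_0(3) by blast
  next
    assume "q0 r = r"
    then show ?thesis
      using h0_r low high h_0(3) r_pos by auto
  qed
qed

lemma shape_h0_t_ne_3r:
  "t \<noteq> 3 * r \<longrightarrow>
         h0 0 = 1
       \<and> (\<forall>i. 1 \<le> i \<and> i \<le> r \<longrightarrow> h0 i = 3 * i)
       \<and> (\<forall>i. r + 1 \<le> i \<and> i + r + 1 \<le> s \<longrightarrow> h0 i = 2 * i + r + 1)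
       \<and> (t + r > 2 * s \<and> s > 2 * r \<longrightarrow> h0 (s - r) = 2 * (s - r) + r + 1)
       \<and> (t + r > 2 * s \<and> s = 2 * r \<longrightarrow> h0 (s - r) = 2 * (s - r) + r)
       \<and> (\<forall>i. s + 1 \<le> i + r \<and> i + s + 1 \<le> t \<longrightarrow> h0 i = i + s + 1)
       \<and> (\<forall>i. t \<le> i + s \<and> i \<le> m \<longrightarrow> h0 i = t)" (is "_ \<longrightarrow> ?P")
proof
  assume t3: "t \<noteq> 3 * r"
  have r_less: "r < t - s"
    using t3 t_ge s_ge by linarith
  have "h0 i = 3 * i" if "1 \<le> i" "i \<le> r" for i
    using h0_eq[of i] q0_full[of i] h1_low[of "i - 1"] that r_less r_le by simp
  moreover have "h0 i = 2 * i + r + 1" if "r + 1 \<le> i" "i + r + 1 \<le> s" for i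
    using h0_eq[of i] q0_full[of i] h1_mid[of "i - 1"] that t_ge s_le by simp
  moreover have "h0 (s - r) = 2 * (s - r) + r + 1" if "t + r > 2 * s" "s > 2 * r"
    using h0_eq[of "s - r"] q0_full[of "s - r"] h1_mid[of "s - r - 1"] that s_le r_pos by simp
  moreover have "h0 (s - r) = 2 * (s - r) + r" if "t + r > 2 * s" "s = 2 * r"
    using h0_eq[of r] q0_full[of r] h1_low[of "r - 1"] that r_pos r_le by simp
  moreover have "h0 i = i + s + 1" if "s + 1 \<le> i + r" "i + s + 1 \<le> t" for i
    using h0_eq[of i] q0_full[of i] h1_const[of "i - 1"] that t_le s_ge r_pos by simp
  moreover have "h0 i = t" if "t \<le> i + s" "i \<le> m" for i
  proof -
    have "h1 (i - 1) = s"
    proof (cases "s \<le> (i - 1) + r")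
      case True
      then show ?thesis
        using h1_const[of "i - 1"] that by simp
    next
      case False
      then have "i = s - r" "s > 2 * r"
        using that t_ge t3 s_ge r_pos by linarith+
      then show ?thesis
        using h1_mid[of "i - 1"] by simp
    qed
    then show ?thesis
      using h0_eq[of i] q0_const[of i] that t_ge s_ge r_pos by simp
  qed
  ultimately show ?P
    using h_0(3) by blast
qed

end

lemma shape_general_case:
  assumes "r = h2 (m - 1)" "s = h1 (m - 1)" "t = h0 m" "d = 2 * m"
  shows "d \<ge> 4 \<and> 1 \<le> r \<and> r \<le> m - 1 \<and> 2 * r \<le> s \<and> s \<le> m + r
        \<and> 2 * s \<le> t + r \<and> t \<le> m + s + 1 \<longrightarrow>
      (\<forall>i. i \<le> r - 1 \<longrightarrow> h2 i = i + 1)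
    \<and> (\<forall>i. r \<le> i \<and> i \<le> m - 1 \<longrightarrow> h2 i = r)
    \<and> (\<forall>i. i \<le> r - 1 \<longrightarrow> h1 i = 2 * i + 1)
    \<and> (\<forall>i. r \<le> i \<and> i + r + 1 \<le> s \<longrightarrow> h1 i = i + r + 1)
    \<and> (\<forall>i. s \<le> i + r \<and> i \<le> m - 1 \<longrightarrow> h1 i = s)
    \<and> (t = 3 * r \<longrightarrow>
         (h0 0 = 1
          \<and> (\<forall>i. 1 \<le> i \<and> i \<le> r - 1 \<longrightarrow> h0 i = 3 * i)
          \<and> (\<forall>i. r \<le> i \<and> i \<le> m \<longrightarrow> h0 i = 3 * r))
       \<or> (h0 0 = 1
          \<and> (\<forall>i. 1 \<le> i \<and> i \<le> r - 1 \<longrightarrow> h0 i = 3 * i)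
          \<and> h0 r = 3 * r - 1
          \<and> (\<forall>i. r + 1 \<le> i \<and> i \<le> m \<longrightarrow> h0 i = 3 * r)))
    \<and> (t \<noteq> 3 * r \<longrightarrow>
         h0 0 = 1
       \<and> (\<forall>i. 1 \<le> i \<and> i \<le> r \<longrightarrow> h0 i = 3 * i)
       \<and> (\<forall>i. r + 1 \<le> i \<and> i + r + 1 \<le> s \<longrightarrow> h0 i = 2 * i + r + 1)
       \<and> (t + r > 2 * s \<and> s > 2 * r \<longrightarrow> h0 (s - r) = 2 * (s - r) + r + 1)
       \<and> (t + r > 2 * s \<and> s = 2 * r \<longrightarrow> h0 (s - r) = 2 * (s - r) + r)
       \<and> (\<forall>i. s + 1 \<le> i + r \<and> i + s + 1 \<le> t \<longrightarrow> h0 i = i + s + 1)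
       \<and> (\<forall>i. t \<le> i + s \<and> i \<le> m \<longrightarrow> h0 i = t))" (is "?H \<longrightarrow> ?P")
proof
  assume ?H
  then have hyps: "2 \<le> m" "1 \<le> r" "r \<le> m - 1" "2 * r \<le> s" "s \<le> m + r" "2 * s \<le> t + r"
    "t \<le> m + s + 1"
    using assms(4) by auto
  note h2_h1 = shape_h2_h1[OF assms(1-3) hyps]
    and h0 = shape_h0_t_eq_3r[OF assms(1-3) hyps] shape_h0_t_ne_3r[OF assms(1-3) hyps]
  show ?P
    using h2_h1 h0 by (intro conjI) (elim conjE, assumption)+
qed

lemma shape_extremal_case:
  assumes r: "r = h2 (m - 1)" and s: "s = h1 (m - 1)" and t: "t = h0 m" and d: "d = 2 * m"
  shows "r = m \<and> s = d - 1 \<and> 3 * m \<le> t + 2 \<and> t \<le> 3 * m \<longrightarrow>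
      (\<forall>i. i \<le> m - 1 \<longrightarrow> h2 i = i + 1 \<and> h1 i = 2 * i + 1)
    \<and> h0 0 = 1
    \<and> (\<forall>i. 1 \<le> i \<and> i \<le> m - 1 \<longrightarrow> h0 i = 3 * i)
    \<and> h0 m = t"
proof
  assume "r = m \<and> s = d - 1 \<and> 3 * m \<le> t + 2 \<and> t \<le> 3 * m"
  then have r_m: "r = m" and s_m: "s = 2 * m - 1"
    using d by auto
  have h2_i: "h2 i = i + 1" if "i \<le> m - 1" for i
    using h2_full[of i] that r r_m m_pos by linarith
  have q1_i: "q1 i = i + 1" if "1 \<le> i" "i \<le> m - 1" for i
  proof -
    have "2 \<le> m"
      using that by linarith
    then have "h2 (m - 1 - 1) = m - 1"
      using h2_i[of "m - 1 - 1"] by simp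
    then have "q1 (m - 1) = m"
      using h1_eq[of "m - 1"] s s_m \<open>2 \<le> m\<close> by simp
    then show ?thesis
      using macaulay_2var_full[OF macaulay(2) that] that by simp
  qed
  have h1_i: "h1 i = 2 * i + 1" if "i \<le> m - 1" for i
    using h_0(2) h1_eq[of i] q1_i[of i] h2_i[of "i - 1"] that by (cases "i = 0") auto
  have "h0 i = 3 * i" if "1 \<le> i" "i \<le> m - 1" for i
  proof -
    have "q0 i = i + 1"
      using q1_le_q0[OF that(1)] q1_i[OF that] macaulay_2var_le[OF macaulay(3) that(1)] by linarith
    then show ?thesis
      using h0_eq[of i] h1_i[of "i - 1"] that by simp
  qed
  then show "(\<forall>i. i \<le> m - 1 \<longrightarrow> h2 i = i + 1 \<and> h1 i = 2 * i + 1)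
    \<and> h0 0 = 1 \<and> (\<forall>i. 1 \<le> i \<and> i \<le> m - 1 \<longrightarrow> h0 i = 3 * i) \<and> h0 m = t"
    using h2_i h1_i h_0(3) t by blast
qed

end

lemma macaulay_2var_cong:
  "macaulay_2var q \<Longrightarrow> (\<And>i. 1 \<le> i \<Longrightarrow> p i = q i) \<Longrightarrow> macaulay_2var p"
  unfolding macaulay_2var_def by simp

lemma hilbert_triple_of_form:
  fixes F l :: "'k::field_char_0 poly3"
  assumes F: "F \<noteq> 0" "homog (2 * m) F" and m: "1 \<le> m" and l: "homog 1 l"
    and l2: "act l (act l F) \<noteq> 0" and l3: "act l (act l (act l F)) = 0"
  obtains q1 q0
  where "hilbert_triple (hilb (act l (act l F))) (hilb (act l F)) (hilb F) q1 q0 m"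
proof -
  obtain k where k: "k < 3" "l (unit3 k) \<noteq> 0"
    using linear_form_coeff_nonzeroE[OF l] l2 by fastforce
  have hom: "homog (2 * m - 1) (act l F)" "homog (2 * m - 2) (act l (act l F))"
    using homog_act[OF l] F(2) by (metis diff_diff_left one_add_one)+
  note step = hilb_eq_hilb_diff_add[OF l k]
  have "hilbert_triple (hilb (act l (act l F))) (hilb (act l F)) (hilb F)
      (hilb_diff k l (act l F)) (hilb_diff k l F) m"
  proof
    have "hilb (act l (act l F)) i = hilb_diff k l (act l (act l F)) i" if "1 \<le> i" for i
      using step[OF that, of "act l (act l F)"] l3 hilb_zero_poly by simp
    then show "macaulay_2var (hilb (act l (act l F)))"
      by (rule macaulay_2var_cong[OF macaulay_2var_hilb_diff[OF l k(1)]])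
    show "macaulay_2var (hilb_diff k l (act l F))" "macaulay_2var (hilb_diff k l F)"
      using macaulay_2var_hilb_diff[OF l k(1)] by blast+
    have "act l F \<noteq> 0"
      using l2 by auto
    then show "hilb (act l (act l F)) 0 = 1" "hilb (act l F) 0 = 1" "hilb F 0 = 1"
      using hilb_degree_0 F(1) l2 by blast+
    show "1 \<le> i \<Longrightarrow> hilb (act l F) i = hilb_diff k l (act l F) i + hilb (act l (act l F)) (i - 1)"
      "1 \<le> i \<Longrightarrow> hilb F i = hilb_diff k l F i + hilb (act l F) (i - 1)" for i
      using step by blast+
    show "hilb_diff k l (act l F) i \<le> hilb_diff k l F i" for i
      by (rule hilb_diff_act_le[OF l])
    show "i \<le> 2 * m - 2 \<Longrightarrow> hilb (act l (act l F)) i = hilb (act l (act l F)) (2 * m - 2 - i)"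
      "i \<le> 2 * m - 1 \<Longrightarrow> hilb (act l F) i = hilb (act l F) (2 * m - 1 - i)"
      "i \<le> 2 * m \<Longrightarrow> hilb F i = hilb F (2 * m - i)" for i
      using hilb_symmetric[OF hom(2)] hilb_symmetric[OF hom(1)] hilb_symmetric[OF F(2)] by blast+
  qed (rule m)
  then show thesis
    by (rule that)
qed

theorem theorem4p2:
  fixes F l :: "'k::field_char_0 poly3" and d m r s t :: nat
  assumes F_poly: "is_poly3 F" and F_nz: "F \<noteq> 0" and F_hom: "homog d F"
    and d_even: "d = 2 * m" and d_ge: "d \<ge> 2"
    and l_lin: "homog 1 l"
    and l2: "act (ppow l 2) F \<noteq> 0" and l3: "act (ppow l 3) F = 0"
    and r_def: "r = hilb (act (ppow l 2) F) (m - 1)"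
    and s_def: "s = hilb (act (ppow l 1) F) (m - 1)"
    and t_def: "t = hilb F m"
  shows
   "(d \<ge> 4 \<and> 1 \<le> r \<and> r \<le> m - 1 \<and> 2 * r \<le> s \<and> s \<le> m + r
        \<and> 2 * s \<le> t + r \<and> t \<le> m + s + 1 \<longrightarrow>
      (\<forall>i. i \<le> r - 1 \<longrightarrow> hilb (act (ppow l 2) F) i = i + 1)
    \<and> (\<forall>i. r \<le> i \<and> i \<le> m - 1 \<longrightarrow> hilb (act (ppow l 2) F) i = r)
    \<and> (\<forall>i. i \<le> r - 1 \<longrightarrow> hilb (act (ppow l 1) F) i = 2 * i + 1)
    \<and> (\<forall>i. r \<le> i \<and> i + r + 1 \<le> s \<longrightarrow> hilb (act (ppow l 1) F) i = i + r + 1)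
    \<and> (\<forall>i. s \<le> i + r \<and> i \<le> m - 1 \<longrightarrow> hilb (act (ppow l 1) F) i = s)
    \<and> (t = 3 * r \<longrightarrow>
         (hilb F 0 = 1
          \<and> (\<forall>i. 1 \<le> i \<and> i \<le> r - 1 \<longrightarrow> hilb F i = 3 * i)
          \<and> (\<forall>i. r \<le> i \<and> i \<le> m \<longrightarrow> hilb F i = 3 * r))
       \<or> (hilb F 0 = 1
          \<and> (\<forall>i. 1 \<le> i \<and> i \<le> r - 1 \<longrightarrow> hilb F i = 3 * i)
          \<and> hilb F r = 3 * r - 1
          \<and> (\<forall>i. r + 1 \<le> i \<and> i \<le> m \<longrightarrow> hilb F i = 3 * r)))
    \<and> (t \<noteq> 3 * r \<longrightarrow>
         hilb F 0 = 1
       \<and> (\<forall>i. 1 \<le> i \<and> i \<le> r \<longrightarrow> hilb F i = 3 * i)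
       \<and> (\<forall>i. r + 1 \<le> i \<and> i + r + 1 \<le> s \<longrightarrow> hilb F i = 2 * i + r + 1)
       \<and> (t + r > 2 * s \<and> s > 2 * r \<longrightarrow> hilb F (s - r) = 2 * (s - r) + r + 1)
       \<and> (t + r > 2 * s \<and> s = 2 * r \<longrightarrow> hilb F (s - r) = 2 * (s - r) + r)
       \<and> (\<forall>i. s + 1 \<le> i + r \<and> i + s + 1 \<le> t \<longrightarrow> hilb F i = i + s + 1)
       \<and> (\<forall>i. t \<le> i + s \<and> i \<le> m \<longrightarrow> hilb F i = t)))
  \<and> (r = m \<and> s = d - 1 \<and> 3 * m \<le> t + 2 \<and> t \<le> 3 * m \<longrightarrow>
      (\<forall>i. i \<le> m - 1 \<longrightarrow> hilb (act (ppow l 2) F) i = i + 1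
                         \<and> hilb (act (ppow l 1) F) i = 2 * i + 1)
    \<and> hilb F 0 = 1
    \<and> (\<forall>i. 1 \<le> i \<and> i \<le> m - 1 \<longrightarrow> hilb F i = 3 * i)
    \<and> hilb F m = t)"
proof -
  have ppow: "act (ppow l 1) F = act l F" "act (ppow l 2) F = act l (act l F)"
    "act (ppow l 3) F = act l (act l (act l F))"
    unfolding act_ppow_funpow[OF l_lin] by (simp_all add: numeral_3_eq_3 numeral_2_eq_2)
  obtain q1 q0 where
    "hilbert_triple (hilb (act (ppow l 2) F)) (hilb (act (ppow l 1) F)) (hilb F) q1 q0 m"
    using hilbert_triple_of_form[OF F_nz F_hom[unfolded d_even] _ l_lin] l2 l3 d_even d_ge
    unfolding ppow by auto
  then interpret hilbert_triple "hilb (act (ppow l 2) F)" "hilb (act (ppow l 1) F)" "hilb F" q1 q0 m .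
  show ?thesis
    using shape_general_case[OF r_def s_def t_def d_even] shape_extremal_case[OF r_def s_def t_def d_even]
    by (rule conjI)
qed

end
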